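(* Let $P\subseteq\omega$ and let $p_0\ge p_1\ge p_2\ge\cdots$ be a sequence of $\mathbb C$-conditions with $\lim_s|p_s|=\infty$ which is 3-generic relative to $P$, and let $f=\bigcup_s\sigma^{p_s}:[\omega]^2\to 2$. Then $f\oplus P$ does not compute any set p-homogeneous for $f$.
   Context: $\mathbb C$ is the following notion of forcing. A condition is a triple $p=\langle\sigma^p,l^p,|p|\rangle$ where $|p|\in\omega$, $\sigma^p:[|p|]^2\to 2$, $l^p:|p|\to 2\times\omega$, and whenever $l^p(x)=\langle i,z\rangle$, $\sigma^p(x,y)$ is defined and $y\ge z$, then $\sigma^p(x,y)=i$. $q\le p$ if $|q|\ge|p|$, $\sigma^q\supseteq\sigma^p$, $l^q\supseteq l^p$. A descending sequence $(p_s)$ is 3-generic relative to $P$ if for every set $W$ of conditions that is $\Sigma^0_3$-definable in $P$, either some $p_s$ lies in $W$ or some $p_s$ has no extension in $W$. $f(x,y)$ means $f(\{x,y\})$ for $x<y$. $A\oplus B=\{2x:x\in A\}\cup\{2y+1:y\in B\}$. A set $H=H_L\oplus H_R$ with $H_L,H_R$ infinite is p-homogeneous for $f$ if $f(\{x,y\})$ is constant over $x\in H_L$, $y\in H_R$, $x\neq y$. *)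

theory Defs
  imports Main "HOL-Library.Nat_Bijection"
begin

datatype rf = Zr | Sc | Pj nat | Cn rf "rf list" | Pr rf rf | Mn rf | Orc

definition arg0 :: "nat list \<Rightarrow> nat" where
  "arg0 xs = (if xs = [] then 0 else hd xs)"

inductive ev :: "nat set \<Rightarrow> rf \<Rightarrow> nat list \<Rightarrow> nat \<Rightarrow> bool" for A :: "nat set" where
  ev_Zr: "ev A Zr xs 0"
| ev_Sc: "ev A Sc xs (Suc (arg0 xs))"
| ev_Pj: "ev A (Pj i) xs (if i < length xs then xs ! i else 0)"
| ev_Cn: "length ys = length gs \<Longrightarrow> (\<forall>i<length gs. ev A (gs ! i) xs (ys ! i))
           \<Longrightarrow> ev A f ys v \<Longrightarrow> ev A (Cn f gs) xs v"
| ev_Pr0: "ev A f xs v \<Longrightarrow> ev A (Pr f g) (0 # xs) v"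
| ev_PrS: "ev A (Pr f g) (n # xs) u \<Longrightarrow> ev A g (n # u # xs) v
           \<Longrightarrow> ev A (Pr f g) (Suc n # xs) v"
| ev_Mn: "ev A f (n # xs) 0 \<Longrightarrow> (\<forall>m<n. \<exists>u. u \<noteq> 0 \<and> ev A f (m # xs) u)
           \<Longrightarrow> ev A (Mn f) xs n"
| ev_Orc: "ev A Orc xs (if arg0 xs \<in> A then 1 else 0)"

definition turing_le :: "nat set \<Rightarrow> nat set \<Rightarrow> bool" where
  "turing_le B A \<longleftrightarrow> (\<exists>e. \<forall>x. ev A e [x] (if x \<in> B then 1 else 0))"

definition rec_rel :: "nat set \<Rightarrow> nat \<Rightarrow> (nat list \<Rightarrow> bool) \<Rightarrow> bool" where
  "rec_rel A k R \<longleftrightarrow> (\<exists>e. \<forall>xs. length xs = k \<longrightarrow> ev A e xs (if R xs then 1 else 0))"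

definition sigma3 :: "nat set \<Rightarrow> nat set \<Rightarrow> bool" where
  "sigma3 A S \<longleftrightarrow> (\<exists>R. rec_rel A 4 R \<and>
      (\<forall>x. x \<in> S \<longleftrightarrow> (\<exists>a. \<forall>b. \<exists>c. R [x, a, b, c])))"

definition join :: "nat set \<Rightarrow> nat set \<Rightarrow> nat set" where
  "join A B = {2 * x | x. x \<in> A} \<union> {2 * y + 1 | y. y \<in> B}"

text \<open>A condition is a pair (sg, lb): |p| = length lb; sg ! y is the list of
  values sigma(x,y) for x < y (so length (sg ! y) = y); lb ! x = (i, z) is l(x).\<close>
type_synonym cond = "nat list list \<times> (nat \<times> nat) list"

definition clen :: "cond \<Rightarrow> nat" where
  "clen p = length (snd p)"

definition csig :: "cond \<Rightarrow> nat \<Rightarrow> nat \<Rightarrow> nat" where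
  "csig p x y = fst p ! y ! x"

definition clab :: "cond \<Rightarrow> nat \<Rightarrow> nat \<times> nat" where
  "clab p x = snd p ! x"

definition is_cond :: "cond \<Rightarrow> bool" where
  "is_cond p \<longleftrightarrow>
     length (fst p) = clen p \<and>
     (\<forall>y<clen p. length (fst p ! y) = y) \<and>
     (\<forall>x y. x < y \<and> y < clen p \<longrightarrow> csig p x y < 2) \<and>
     (\<forall>x<clen p. fst (clab p x) < 2) \<and>
     (\<forall>x y. x < y \<and> y < clen p \<and> snd (clab p x) \<le> y \<longrightarrow> csig p x y = fst (clab p x))"

definition cle :: "cond \<Rightarrow> cond \<Rightarrow> bool" where
  "cle q p \<longleftrightarrow> clen q \<ge> clen p \<and>
     (\<forall>x y. x < y \<and> y < clen p \<longrightarrow> csig q x y = csig p x y) \<and>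
     (\<forall>x<clen p. clab q x = clab p x)"

definition ccode :: "cond \<Rightarrow> nat" where
  "ccode p = prod_encode (list_encode (map list_encode (fst p)),
                          list_encode (map prod_encode (snd p)))"

definition three_generic :: "nat set \<Rightarrow> (nat \<Rightarrow> cond) \<Rightarrow> bool" where
  "three_generic P ps \<longleftrightarrow>
     (\<forall>W. W \<subseteq> Collect is_cond \<longrightarrow> sigma3 P (ccode ` W) \<longrightarrow>
        (\<exists>s. ps s \<in> W) \<or> (\<exists>s. \<not> (\<exists>q\<in>W. cle q (ps s))))"

text \<open>A coloring of pairs is given by f x y for x < y (values for x >= y are irrelevant).\<close>
definition fpair :: "(nat \<Rightarrow> nat \<Rightarrow> nat) \<Rightarrow> nat \<Rightarrow> nat \<Rightarrow> nat" where
  "fpair f x y = (if x < y then f x y else f y x)"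

definition colset :: "(nat \<Rightarrow> nat \<Rightarrow> nat) \<Rightarrow> nat set" where
  "colset f = {prod_encode (x, y) | x y. x < y \<and> f x y = 1}"

definition p_homog :: "(nat \<Rightarrow> nat \<Rightarrow> nat) \<Rightarrow> nat set \<Rightarrow> bool" where
  "p_homog f H \<longleftrightarrow>
     (let HL = {x. 2 * x \<in> H}; HR = {y. 2 * y + 1 \<in> H} in
      infinite HL \<and> infinite HR \<and>
      (\<exists>c. \<forall>x\<in>HL. \<forall>y\<in>HR. x \<noteq> y \<longrightarrow> fpair f x y = c))"

end

theory Submission
  imports Defs "HOL-Library.Nat_Bijection"
begin

text \<open>
  Suppose \<open>e\<close> computes from \<open>f \<oplus> P\<close> a set \<open>H = H\<^sub>L \<oplus> H\<^sub>R\<close> that is p-homogeneous for \<open>f\<close>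
  with colour \<open>col\<close>. Reading \<open>f\<close> off a condition gives only a partial oracle, so a
  condition forces \<open>n \<in> H\<close> when \<open>e\<close> outputs 1 on \<open>n\<close> using only queries answered by the
  condition; this is \<open>\<Sigma>\<^sup>0\<^sub>1\<close> in \<open>P\<close>. A condition is decisive if it forces some \<open>x \<in> H\<^sub>L\<close> and
  \<open>y \<in> H\<^sub>R\<close> whose colour differs from \<open>col\<close>, or if no extension of it forces elements beyond
  some bound into one of the two halves; the decisive conditions form a \<open>\<Sigma>\<^sup>0\<^sub>3(P)\<close> set.
  They are dense: force some \<open>x\<close> into \<open>H\<^sub>L\<close>, use the label of \<open>x\<close> to commit all later
  pairs \<open>{x, y}\<close> to a colour \<open>\<noteq> col\<close>, and then force some later \<open>y\<close> into \<open>H\<^sub>R\<close>. By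
  3-genericity the sequence contains a decisive condition, and since every computation from
  \<open>f \<oplus> P\<close> is eventually captured by the conditions of the sequence, this contradicts the
  choice of \<open>H\<close>.
\<close>

section \<open>Functions computable relative to an oracle\<close>

definition computes :: "nat set \<Rightarrow> nat \<Rightarrow> rf \<Rightarrow> (nat list \<Rightarrow> nat) \<Rightarrow> bool" where
  "computes A k e F \<longleftrightarrow> (\<forall>xs. length xs = k \<longrightarrow> ev A e xs (F xs))"

definition computable :: "nat set \<Rightarrow> nat \<Rightarrow> (nat list \<Rightarrow> nat) \<Rightarrow> bool" where
  "computable A k F \<longleftrightarrow> (\<exists>e. computes A k e F)"

definition decidable :: "nat set \<Rightarrow> nat \<Rightarrow> (nat list \<Rightarrow> bool) \<Rightarrow> bool" where
  "decidable A k R \<longleftrightarrow> computable A k (\<lambda>xs. if R xs then 1 else 0)"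

lemma computable_cong:
  "computable A k F \<Longrightarrow> (\<And>xs. length xs = k \<Longrightarrow> F xs = G xs) \<Longrightarrow> computable A k G"
  unfolding computable_def computes_def by metis

lemma decidable_cong:
  "decidable A k R \<Longrightarrow> (\<And>xs. length xs = k \<Longrightarrow> R xs = S xs) \<Longrightarrow> decidable A k S"
  unfolding decidable_def by (erule computable_cong) simp

lemma computable_var: "i < k \<Longrightarrow> computable A k (\<lambda>xs. xs ! i)"
  unfolding computable_def computes_def
  by (rule exI[of _ "Pj i"]) (metis (full_types) ev_Pj)

lemma computable_zero: "computable A k (\<lambda>xs. 0)"
  unfolding computable_def computes_def by (auto intro: ev_Zr)

lemma computable_oracle: "computable A 1 (\<lambda>xs. if xs ! 0 \<in> A then 1 else 0)"
proof -
  have "ev A Orc xs (if xs ! 0 \<in> A then 1 else 0)" if "length xs = 1" for xs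
    using that ev_Orc[of A xs] by (cases xs) (auto simp: arg0_def)
  then show ?thesis unfolding computable_def computes_def by blast
qed

lemma computable_suc1: "computable A 1 (\<lambda>xs. Suc (xs ! 0))"
proof -
  have "ev A Sc xs (Suc (xs ! 0))" if "length xs = 1" for xs
    using that ev_Sc[of A xs] by (cases xs) (auto simp: arg0_def)
  then show ?thesis unfolding computable_def computes_def by blast
qed

lemma ex_computes_list: "(\<forall>F\<in>set Fs. computable A k F) \<Longrightarrow> \<exists>gs. list_all2 (computes A k) gs Fs"
proof (induction Fs)
  case Nil then show ?case by auto
next
  case (Cons F Fs)
  then obtain gs where "list_all2 (computes A k) gs Fs" by auto
  moreover obtain g where "computes A k g F" using Cons.prems computable_def by auto
  ultimately show ?case by (intro exI[of _ "g # gs"]) auto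
qed

lemma computable_comp:
  assumes "computable A (length Fs) G" "\<forall>F\<in>set Fs. computable A k F"
  shows "computable A k (\<lambda>xs. G (map (\<lambda>F. F xs) Fs))"
proof -
  obtain f where f: "computes A (length Fs) f G" using assms(1) computable_def by auto
  obtain gs where gs: "list_all2 (computes A k) gs Fs" using ex_computes_list assms(2) by blast
  have "computes A k (Cn f gs) (\<lambda>xs. G (map (\<lambda>F. F xs) Fs))"
    unfolding computes_def
  proof (intro allI impI)
    fix xs :: "nat list" assume len: "length xs = k"
    have lg: "length gs = length Fs" using gs list_all2_lengthD by blast
    have a: "length (map (\<lambda>F. F xs) Fs) = length gs" using lg by simp
    have b: "\<forall>i<length gs. ev A (gs ! i) xs (map (\<lambda>F. F xs) Fs ! i)"
      using gs len lg by (auto simp: computes_def list_all2_conv_all_nth)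
    have c: "ev A f (map (\<lambda>F. F xs) Fs) (G (map (\<lambda>F. F xs) Fs))"
      using f by (simp add: computes_def)
    show "ev A (Cn f gs) xs (G (map (\<lambda>F. F xs) Fs))"
      by (rule ev_Cn[OF a b c])
  qed
  then show ?thesis unfolding computable_def by blast
qed

lemma computable_comp1: "computable A 1 G \<Longrightarrow> computable A k F \<Longrightarrow> computable A k (\<lambda>xs. G [F xs])"
  using computable_comp[of A "[F]" G k] by simp

lemma computable_comp2:
  "computable A 2 G \<Longrightarrow> computable A k F1 \<Longrightarrow> computable A k F2 \<Longrightarrow>
    computable A k (\<lambda>xs. G [F1 xs, F2 xs])"
  using computable_comp[of A "[F1, F2]" G k] by (simp add: numeral_2_eq_2)

lemma computable_rec_nat:
  assumes "computable A k F" "computable A (Suc (Suc k)) G"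
  shows "computable A (Suc k) (\<lambda>xs. rec_nat (F (tl xs)) (\<lambda>m u. G (m # u # tl xs)) (hd xs))"
proof -
  obtain f where f: "computes A k f F" using assms(1) computable_def by auto
  obtain g where g: "computes A (Suc (Suc k)) g G" using assms(2) computable_def by auto
  have "ev A (Pr f g) (n # ys) (rec_nat (F ys) (\<lambda>m u. G (m # u # ys)) n)" if "length ys = k" for n
    ys
  proof (induction n)
    case 0 then show ?case using f that by (auto simp: computes_def intro: ev_Pr0)
  next
    case (Suc n) then show ?case using g that by (auto simp: computes_def intro: ev_PrS)
  qed
  then have "computes A (Suc k) (Pr f g) (\<lambda>xs. rec_nat (F (tl xs)) (\<lambda>m u. G (m # u # tl xs))
    (hd xs))"
    unfolding computes_def by (metis length_Suc_conv list.sel(1,3))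
  then show ?thesis unfolding computable_def by blast
qed

lemma computable_const: "computable A k (\<lambda>xs. c)"
proof (induction c)
  case 0 then show ?case by (rule computable_zero)
next
  case (Suc c) then show ?case using computable_comp1[OF computable_suc1 Suc] by simp
qed

lemma computable_suc: "computable A k F \<Longrightarrow> computable A k (\<lambda>xs. Suc (F xs))"
  using computable_comp1[OF computable_suc1] by simp

definition computable1 :: "nat set \<Rightarrow> (nat \<Rightarrow> nat) \<Rightarrow> bool" where
  "computable1 A h \<longleftrightarrow> computable A 1 (\<lambda>xs. h (xs ! 0))"
definition computable2 :: "nat set \<Rightarrow> (nat \<Rightarrow> nat \<Rightarrow> nat) \<Rightarrow> bool" where
  "computable2 A h \<longleftrightarrow> computable A 2 (\<lambda>xs. h (xs ! 0) (xs ! 1))"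

lemma computable1_app: "computable1 A h \<Longrightarrow> computable A k F \<Longrightarrow> computable A k (\<lambda>xs. h (F xs))"
  unfolding computable1_def using computable_comp1[of A "\<lambda>xs. h (xs ! 0)" k F] by simp

lemma computable2_app:
  "computable2 A h \<Longrightarrow> computable A k F \<Longrightarrow> computable A k G \<Longrightarrow> computable A k (\<lambda>xs. h (F xs) (G xs))"
  unfolding computable2_def using computable_comp2[of A "\<lambda>xs. h (xs ! 0) (xs ! 1)" k F G] by simp

lemma computable2_rec_nat:
  assumes "computable A 1 (\<lambda>xs. F (xs ! 0))" "computable A 3 (\<lambda>xs. G (xs ! 0) (xs ! 1) (xs ! 2))"
  shows "computable2 A (\<lambda>n y. rec_nat (F y) (\<lambda>m u. G m u y) n)"
proof -
  have "computable A (Suc 1) (\<lambda>xs. rec_nat ((\<lambda>xs. F (xs ! 0)) (tl xs))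
      (\<lambda>m u. (\<lambda>xs. G (xs ! 0) (xs ! 1) (xs ! 2)) (m # u # tl xs)) (hd xs))"
    by (rule computable_rec_nat) (use assms in \<open>simp_all add: numeral_3_eq_3\<close>)
  then show ?thesis unfolding computable2_def numeral_2_eq_2 One_nat_def
    by (rule computable_cong) (auto simp: length_Suc_conv)
qed

lemma computable1_rec_nat:
  assumes "computable A 2 (\<lambda>xs. G (xs ! 0) (xs ! 1))"
  shows "computable1 A (\<lambda>n. rec_nat c G n)"
proof -
  have "computable A (Suc 0) (\<lambda>xs. rec_nat ((\<lambda>xs. c) (tl xs))
      (\<lambda>m u. (\<lambda>xs. G (xs ! 0) (xs ! 1)) (m # u # tl xs)) (hd xs))"
    by (rule computable_rec_nat) (use assms computable_const in \<open>simp_all add: numeral_2_eq_2\<close>)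
  then show ?thesis unfolding computable1_def One_nat_def
    by (rule computable_cong) (auto simp: length_Suc_conv)
qed

lemma computable2_add: "computable2 A (+)"
proof -
  have "computable2 A (\<lambda>n y. rec_nat y (\<lambda>m u. Suc u) n)"
    using computable2_rec_nat[of A "\<lambda>y. y" "\<lambda>m u y. Suc u"] computable_var[of _ 1]
      computable_suc[OF computable_var[of 1 3]]
    by simp
  moreover have "rec_nat y (\<lambda>m u. Suc u) n = n + y" for n y :: nat by (induction n) auto
  ultimately show ?thesis unfolding computable2_def by simp
qed

lemma computable_add: "computable A k F \<Longrightarrow> computable A k G \<Longrightarrow> computable A k (\<lambda>xs. F xs + G xs)"
  using computable2_app[OF computable2_add] .

lemma computable2_mult: "computable2 A (*)"
proof -
  have "computable2 A (\<lambda>n y. rec_nat 0 (\<lambda>m u. u + y) n)"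
    using computable2_rec_nat[of A "\<lambda>y. 0" "\<lambda>m u y. u + y"] computable_const
      computable_add[OF computable_var[of 1 3] computable_var[of 2 3]]
    by simp
  moreover have "rec_nat 0 (\<lambda>m u. u + y) n = n * y" for n y :: nat by (induction n) auto
  ultimately show ?thesis unfolding computable2_def by simp
qed

lemma computable_mult: "computable A k F \<Longrightarrow> computable A k G \<Longrightarrow> computable A k (\<lambda>xs. F xs * G xs)"
  using computable2_app[OF computable2_mult] .

lemma computable1_pred: "computable1 A (\<lambda>n. n - 1)"
proof -
  have "computable1 A (\<lambda>n. rec_nat 0 (\<lambda>m u. m) n)"
    by (rule computable1_rec_nat) (rule computable_var, simp)
  moreover have "rec_nat 0 (\<lambda>m u. m) n = n - 1" for n :: nat by (cases n) auto
  ultimately show ?thesis by simp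
qed

lemma computable2_monus: "computable2 A (-)"
proof -
  have "computable2 A (\<lambda>n y. rec_nat y (\<lambda>m u. u - 1) n)"
    using computable2_rec_nat[of A "\<lambda>y. y" "\<lambda>m u y. u - 1"] computable_var[of _ 1]
      computable1_app[OF computable1_pred computable_var[of 1 3]]
    by simp
  moreover have "rec_nat y (\<lambda>m u. u - 1) n = y - n" for n y :: nat by (induction n) auto
  ultimately have "computable2 A (\<lambda>n y. y - n)" by simp
  then have "computable A 2 (\<lambda>xs. (\<lambda>n y. y - n) (xs ! 1) (xs ! 0))"
    by (rule computable2_app) (auto intro: computable_var)
  then show ?thesis unfolding computable2_def by simp
qed

lemma computable_monus: "computable A k F \<Longrightarrow> computable A k G \<Longrightarrow> computable A k (\<lambda>xs. F xs - G xs)"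
  using computable2_app[OF computable2_monus] .

lemma decidable_intro:
  "computable A k H \<Longrightarrow> (\<And>xs. length xs = k \<Longrightarrow> H xs = (if R xs then 1 else 0)) \<Longrightarrow> decidable A k R"
  unfolding decidable_def by (rule computable_cong)

lemma decidable_eq: assumes "computable A k F" "computable A k G" shows
  "decidable A k (\<lambda>xs. F xs = G xs)"
proof (rule decidable_intro)
  show "computable A k (\<lambda>xs. 1 - ((F xs - G xs) + (G xs - F xs)))"
    by (intro computable_monus computable_add computable_const assms)
qed auto

lemma decidable_less: assumes "computable A k F" "computable A k G" shows
  "decidable A k (\<lambda>xs. F xs < G xs)"
proof (rule decidable_intro)
  show "computable A k (\<lambda>xs. 1 - (1 - (G xs - F xs)))"
    by (intro computable_monus computable_const assms)
qed auto

lemma decidable_not: assumes "decidable A k R" shows "decidable A k (\<lambda>xs. \<not> R xs)"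
proof (rule decidable_intro)
  show "computable A k (\<lambda>xs. 1 - (if R xs then 1 else 0))" using assms unfolding decidable_def
    by (intro computable_monus computable_const)
qed auto

lemma decidable_and: assumes "decidable A k R" "decidable A k S" shows "decidable A k (\<lambda>xs. R xs \<and>
  S xs)"
proof (rule decidable_intro)
  show "computable A k (\<lambda>xs. (if R xs then 1 else 0) * (if S xs then 1 else 0))" using assms
    unfolding decidable_def by (intro computable_mult)
qed auto

lemma decidable_or: "decidable A k R \<Longrightarrow> decidable A k S \<Longrightarrow> decidable A k (\<lambda>xs. R xs \<or> S xs)"
  using decidable_not[OF decidable_and[OF decidable_not decidable_not]] by simp

lemma decidable_imp: "decidable A k R \<Longrightarrow> decidable A k S \<Longrightarrow> decidable A k (\<lambda>xs. R xs \<longrightarrow> S xs)"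
  using decidable_or[OF decidable_not] by simp

lemma decidable_iff: assumes "decidable A k R" "decidable A k S" shows "decidable A k (\<lambda>xs. R xs \<longleftrightarrow>
  S xs)"
proof -
  have "decidable A k (\<lambda>xs. (R xs \<longrightarrow> S xs) \<and> (S xs \<longrightarrow> R xs))"
    by (intro decidable_and decidable_imp assms)
  then show ?thesis by (rule decidable_cong) blast
qed

lemma decidable_const: "decidable A k (\<lambda>xs. b)"
  unfolding decidable_def by (cases b) (simp_all add: computable_const)

lemma computable_if: assumes "decidable A k R" "computable A k F" "computable A k G" shows
  "computable A k (\<lambda>xs. if R xs then F xs else G xs)"
proof -
  have "computable A k (\<lambda>xs. (if R xs then 1 else 0) * F xs + (1 - (if R xs then 1 else 0)) * G xs)"
    using assms unfolding decidable_def by (intro computable_add computable_mult computable_monus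
      computable_const)
  then show ?thesis by (rule computable_cong) auto
qed

lemma decidable_le: "computable A k F \<Longrightarrow> computable A k G \<Longrightarrow> decidable A k (\<lambda>xs. F xs \<le> G xs)"
  using decidable_not[OF decidable_less[of A k G F]] by (simp add: not_less)

lemma decidable_ne: "computable A k F \<Longrightarrow> computable A k G \<Longrightarrow> decidable A k (\<lambda>xs. F xs \<noteq> G xs)"
  using decidable_not[OF decidable_eq] by simp

lemma computable1_triangle: "computable1 A triangle"
proof -
  have "computable1 A (\<lambda>n. rec_nat 0 (\<lambda>m u. u + Suc m) n)"
    by (rule computable1_rec_nat) (intro computable_add computable_suc computable_var; simp)
  moreover have "rec_nat 0 (\<lambda>m u. u + Suc m) n = triangle n" for n by (induction n) auto
  ultimately show ?thesis by simp
qed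

lemma computable_iter:
  assumes "computable1 A h" "computable A k N" "computable A k X"
  shows "computable A k (\<lambda>xs. (h ^^ N xs) (X xs))"
proof -
  have "computable2 A (\<lambda>n y. rec_nat y (\<lambda>m u. h u) n)"
    using computable2_rec_nat[of A "\<lambda>y. y" "\<lambda>m u y. h u"] computable_var[of _ 1]
      computable1_app[OF assms(1) computable_var[of 1 3]]
    by simp
  moreover have "rec_nat y (\<lambda>m u. h u) n = (h ^^ n) y" for n y by (induction n) auto
  ultimately have "computable2 A (\<lambda>n y. (h ^^ n) y)" by simp
  from computable2_app[OF this assms(2,3)] show ?thesis .
qed

section \<open>Coding of pairs and lists\<close>

primrec tri_root :: "nat \<Rightarrow> nat" where
  "tri_root 0 = 0"
| "tri_root (Suc a) = (if a - triangle (tri_root a) = tri_root a then Suc (tri_root a) else tri_root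
  a)"

lemma tri_root_inv: "triangle (tri_root a) \<le> a \<and> a \<le> triangle (tri_root a) + tri_root a"
proof (induction a)
  case 0 then show ?case by simp
next
  case (Suc a)
  show ?case
  proof (cases "a - triangle (tri_root a) = tri_root a")
    case True
    then have "a = triangle (tri_root a) + tri_root a" using Suc by linarith
    then show ?thesis using True by simp
  next
    case False
    then have "a < triangle (tri_root a) + tri_root a" using Suc by linarith
    then show ?thesis using False Suc by simp
  qed
qed

lemma prod_decode_tri_root:
  "prod_decode a = (a - triangle (tri_root a), tri_root a - (a - triangle (tri_root a)))"
proof -
  have "prod_encode (a - triangle (tri_root a), tri_root a - (a - triangle (tri_root a))) = a"
    using tri_root_inv[of a] by (simp add: prod_encode_def)
  then show ?thesis by (metis prod_encode_inverse)
qed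

lemma computable1_tri_root: "computable1 A tri_root"
proof -
  have "computable1 A (\<lambda>n. rec_nat 0 (\<lambda>a u. if a - triangle u = u then Suc u else u) n)"
    by (rule computable1_rec_nat) (intro computable_if decidable_eq computable_monus
      computable1_app[OF computable1_triangle] computable_suc computable_var; simp)
  moreover have "rec_nat 0 (\<lambda>a u. if a - triangle u = u then Suc u else u) n = tri_root n" for n
    by (induction n) auto
  ultimately show ?thesis by simp
qed

definition pfst :: "nat \<Rightarrow> nat" where "pfst a = fst (prod_decode a)"
definition psnd :: "nat \<Rightarrow> nat" where "psnd a = snd (prod_decode a)"

lemma pfst_prod_encode[simp]: "pfst (prod_encode p) = fst p" by (simp add: pfst_def)

lemma psnd_prod_encode[simp]: "psnd (prod_encode p) = snd p" by (simp add: psnd_def)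

lemma computable1_pfst: "computable1 A pfst"
proof -
  have "computable A 1 (\<lambda>xs. xs!0 - triangle (tri_root (xs!0)))"
    by (intro computable_monus computable1_app[OF computable1_triangle]
      computable1_app[OF computable1_tri_root] computable_var) simp_all
  then show ?thesis unfolding computable1_def pfst_def by (subst prod_decode_tri_root) simp
qed

lemma computable1_psnd: "computable1 A psnd"
proof -
  have "computable A 1 (\<lambda>xs. tri_root (xs!0) - (xs!0 - triangle (tri_root (xs!0))))"
    by (intro computable_monus computable1_app[OF computable1_triangle]
      computable1_app[OF computable1_tri_root] computable_var) simp_all
  then show ?thesis unfolding computable1_def psnd_def by (subst prod_decode_tri_root) simp
qed

definition hd_code :: "nat \<Rightarrow> nat" where "hd_code c = pfst (c - 1)"
definition tl_code :: "nat \<Rightarrow> nat" where "tl_code c = psnd (c - 1)"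
definition nth_code :: "nat \<Rightarrow> nat \<Rightarrow> nat" where "nth_code c i = hd_code ((tl_code ^^ i) c)"

lemma computable1_hd_code: "computable1 A hd_code"
  unfolding computable1_def hd_code_def by (intro computable1_app[OF computable1_pfst]
    computable_monus computable_var computable_const) simp

lemma computable1_tl_code: "computable1 A tl_code"
  unfolding computable1_def tl_code_def by (intro computable1_app[OF computable1_psnd]
    computable_monus computable_var computable_const) simp

lemma computable_tl_code_iter:
  "computable A k N \<Longrightarrow> computable A k X \<Longrightarrow> computable A k (\<lambda>xs. (tl_code ^^ N xs) (X xs))"
  by (rule computable_iter[OF computable1_tl_code])

lemma computable_nth_code:
  "computable A k X \<Longrightarrow> computable A k N \<Longrightarrow> computable A k (\<lambda>xs. nth_code (X xs) (N xs))"
  unfolding nth_code_def by (intro computable1_app[OF computable1_hd_code] computable_tl_code_iter)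

lemma tl_code_Suc[simp]: "tl_code (Suc (prod_encode (x, y))) = y"
  by (simp add: tl_code_def)

lemma hd_code_Suc[simp]: "hd_code (Suc (prod_encode (x, y))) = x"
  by (simp add: hd_code_def)

lemma tl_code_nil[simp]: "tl_code 0 = 0"
  by (simp add: tl_code_def psnd_def prod_decode_def prod_decode_aux.simps)

lemma tl_code_list_encode: "tl_code (list_encode xs) = list_encode (tl xs)"
  by (cases xs) simp_all

lemma tl_code_iter: "(tl_code ^^ i) (list_encode xs) = list_encode (drop i xs)"
  by (induction i) (simp_all add: tl_code_list_encode drop_Suc drop_tl)

lemma list_encode_0_iff: "list_encode xs = 0 \<longleftrightarrow> xs = []"
  by (cases xs) auto

lemma tl_code_iter_ne: "(tl_code ^^ i) (list_encode xs) \<noteq> 0 \<longleftrightarrow> i < length xs"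
  by (simp add: tl_code_iter list_encode_0_iff not_le)

lemma nth_code_list_encode: "i < length xs \<Longrightarrow> nth_code (list_encode xs) i = xs ! i"
  by (simp add: nth_code_def tl_code_iter Cons_nth_drop_Suc[symmetric])

lemma computable1_mod2: "computable1 A (\<lambda>n. n mod 2)"
proof -
  have "computable1 A (\<lambda>n. rec_nat 0 (\<lambda>m u. 1 - u) n)"
    by (rule computable1_rec_nat) (intro computable_monus computable_const computable_var; simp)
  moreover have "rec_nat 0 (\<lambda>m u. 1 - u) n = n mod 2" for n :: nat
    by (induction n) (auto, presburger)
  ultimately show ?thesis by simp
qed

lemma computable1_div2: "computable1 A (\<lambda>n. n div 2)"
proof -
  have "computable1 A (\<lambda>n. rec_nat 0 (\<lambda>m u. u + m mod 2) n)"
    by (rule computable1_rec_nat) (intro computable_add computable1_app[OF computable1_mod2]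
      computable_var; simp)
  moreover have "rec_nat 0 (\<lambda>m u. u + m mod 2) n = n div 2" for n :: nat
    by (induction n) (auto, presburger)
  ultimately show ?thesis by simp
qed

section \<open>Partial oracles\<close>

text \<open>An oracle value \<open>\<ge> 2\<close> means \<open>undefined\<close>: such queries block the computation.\<close>
inductive ev_partial :: "(nat \<Rightarrow> nat) \<Rightarrow> rf \<Rightarrow> nat list \<Rightarrow> nat \<Rightarrow> bool" for ora :: "nat \<Rightarrow> nat" where
  ev_partial_Zr: "ev_partial ora Zr xs 0"
| ev_partial_Sc: "ev_partial ora Sc xs (Suc (arg0 xs))"
| ev_partial_Pj: "ev_partial ora (Pj i) xs (if i < length xs then xs ! i else 0)"
| ev_partial_Cn: "length ys = length gs \<Longrightarrow> (\<forall>i<length gs. ev_partial ora (gs ! i) xs (ys ! i))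
           \<Longrightarrow> ev_partial ora f ys v \<Longrightarrow> ev_partial ora (Cn f gs) xs v"
| ev_partial_Pr0: "ev_partial ora f xs v \<Longrightarrow> ev_partial ora (Pr f g) (0 # xs) v"
| ev_partial_PrS: "ev_partial ora (Pr f g) (n # xs) u \<Longrightarrow> ev_partial ora g (n # u # xs) v
           \<Longrightarrow> ev_partial ora (Pr f g) (Suc n # xs) v"
| ev_partial_Mn: "ev_partial ora f (n # xs) 0 \<Longrightarrow> (\<forall>m<n. \<exists>u. u \<noteq> 0 \<and> ev_partial ora f (m # xs) u)
           \<Longrightarrow> ev_partial ora (Mn f) xs n"
| ev_partial_Orc: "ora (arg0 xs) < 2 \<Longrightarrow> ev_partial ora Orc xs (ora (arg0 xs))"

lemma ev_partial_mono:
  assumes "ev_partial ora e xs v" "\<forall>a. ora a < 2 \<longrightarrow> ora' a = ora a"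
  shows "ev_partial ora' e xs v"
  using assms(1)
proof (induction rule: ev_partial.induct)
  case (ev_partial_Orc xs)
  then show ?case using assms(2) ev_partial.ev_partial_Orc[of ora' xs] by simp
qed (blast intro: ev_partial.intros)+

definition chi :: "nat set \<Rightarrow> nat \<Rightarrow> nat" where "chi A a = (if a \<in> A then 1 else 0)"

lemma ev_partial_imp_ev:
  assumes "ev_partial ora e xs v" "\<forall>a. ora a < 2 \<longrightarrow> ora a = chi A a"
  shows "ev A e xs v"
  using assms(1)
proof (induction rule: ev_partial.induct)
  case (ev_partial_Orc xs)
  then show ?case using assms(2) ev.ev_Orc[of A xs] by (simp add: chi_def)
qed (blast intro: ev.intros)+

lemma ev_imp_ev_partial:
  assumes "ev A e xs v"
  shows "eventually (\<lambda>N. \<forall>ora. (\<forall>a<N. ora a = chi A a) \<longrightarrow> ev_partial ora e xs v) sequentially"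
  using assms
proof (induction rule: ev.induct)
  case (ev_Cn ys gs xs f v)
  have "eventually (\<lambda>N. \<forall>i\<in>{..<length gs}.
      \<forall>ora. (\<forall>a<N. ora a = chi A a) \<longrightarrow> ev_partial ora (gs ! i) xs (ys ! i)) sequentially"
    using ev_Cn.IH(1) by (intro eventually_ball_finite) auto
  with ev_Cn.IH(2) show ?case
  proof eventually_elim
    case (elim N)
    then show ?case using ev_partial_Cn[OF ev_Cn.hyps(1)] by blast
  qed
next
  case (ev_Pr0 f xs v g)
  from ev_Pr0.IH show ?case by eventually_elim (blast intro: ev_partial_Pr0)
next
  case (ev_PrS f g n xs u v)
  from ev_PrS.IH show ?case by eventually_elim (blast intro: ev_partial_PrS)
next
  case (ev_Mn f n xs)
  have "\<forall>m\<in>{..<n}. eventually (\<lambda>N. \<forall>ora. (\<forall>a<N. ora a = chi A a) \<longrightarrow>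
      (\<exists>u. u \<noteq> 0 \<and> ev_partial ora f (m # xs) u)) sequentially"
  proof
    fix m assume "m \<in> {..<n}"
    then obtain u where "u \<noteq> 0" and ev_u: "eventually (\<lambda>N. \<forall>ora. (\<forall>a<N. ora a = chi A a) \<longrightarrow>
        ev_partial ora f (m # xs) u) sequentially"
      using ev_Mn.IH(2) by auto
    from ev_u show "eventually (\<lambda>N. \<forall>ora. (\<forall>a<N. ora a = chi A a) \<longrightarrow>
        (\<exists>u. u \<noteq> 0 \<and> ev_partial ora f (m # xs) u)) sequentially"
      by (rule eventually_mono) (use \<open>u \<noteq> 0\<close> in blast)
  qed
  then have "eventually (\<lambda>N. \<forall>m\<in>{..<n}. \<forall>ora. (\<forall>a<N. ora a = chi A a) \<longrightarrow>
      (\<exists>u. u \<noteq> 0 \<and> ev_partial ora f (m # xs) u)) sequentially"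
    by (rule eventually_ball_finite[OF finite_lessThan])
  with ev_Mn.IH(1) show ?case
    by eventually_elim (blast intro: ev_partial_Mn)
next
  case (ev_Orc xs)
  have "eventually (\<lambda>N. arg0 xs < N) sequentially" by (rule eventually_gt_at_top)
  then show ?case
  proof eventually_elim
    case (elim N)
    show ?case
    proof (intro allI impI)
      fix ora assume "\<forall>a<N. ora a = chi A a"
      then have "ora (arg0 xs) = (if arg0 xs \<in> A then 1 else 0)" using elim by (simp add: chi_def)
      then show "ev_partial ora Orc xs (if arg0 xs \<in> A then 1 else 0)"
        using ev_partial_Orc[of ora xs] by simp
    qed
  qed
qed (simp_all add: ev_partial_Zr ev_partial_Sc ev_partial_Pj)

inductive_cases evE_Zr: "ev A Zr xs w"
inductive_cases evE_Sc: "ev A Sc xs w"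
inductive_cases evE_Pj: "ev A (Pj i) xs w"
inductive_cases evE_Cn: "ev A (Cn f gs) xs w"
inductive_cases evE_Pr0: "ev A (Pr f g) (0 # xs) w"
inductive_cases evE_PrS: "ev A (Pr f g) (Suc n # xs) w"
inductive_cases evE_Mn: "ev A (Mn f) xs w"
inductive_cases evE_Orc: "ev A Orc xs w"

lemma ev_det:
  assumes "ev A e xs v"
  shows "ev A e xs w \<Longrightarrow> v = w"
  using assms
proof (induction arbitrary: w rule: ev.induct)
  case (ev_Cn ys gs xs f v)
  from ev_Cn.prems obtain ys' where ys': "length ys' = length gs"
    "\<forall>i<length gs. ev A (gs ! i) xs (ys' ! i)" "ev A f ys' w"
    by (rule evE_Cn) auto
  have "ys = ys'" using ev_Cn.IH(1) ys' ev_Cn.hyps(1) by (metis nth_equalityI)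
  then show ?case using ev_Cn.IH(2) ys' by auto
next
  case (ev_Pr0 f xs v g) from ev_Pr0.prems show ?case by (rule evE_Pr0) (use ev_Pr0.IH in auto)
next
  case (ev_PrS f g n xs u v)
  from ev_PrS.prems obtain u' where "ev A (Pr f g) (n # xs) u'" "ev A g (n # u' # xs) w"
    by (rule evE_PrS) auto
  then show ?case using ev_PrS.IH by auto
next
  case (ev_Mn f n xs)
  from ev_Mn.prems have w: "ev A f (w # xs) 0" "\<forall>m<w. \<exists>u. u \<noteq> 0 \<and> ev A f (m # xs) u"
    by (rule evE_Mn; auto)+
  show ?case
  proof (rule ccontr)
    assume "n \<noteq> w"
    then consider "n < w" | "w < n" by linarith
    then show False
    proof cases
      case 1 then obtain u where "u \<noteq> 0" "ev A f (n # xs) u" using w by auto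
      then show False using ev_Mn.IH(1) by auto
    next
      case 2 then obtain u where "u \<noteq> 0" "\<forall>w'. ev A f (w # xs) w' \<longrightarrow> u = w'" using ev_Mn.IH(2)
        by blast
      then show False using w by auto
    qed
  qed
next
  case (ev_Zr xs) then show ?case by (auto elim: evE_Zr)
next
  case (ev_Sc xs) then show ?case by (auto elim: evE_Sc)
next
  case (ev_Pj i xs) then show ?case by (auto elim: evE_Pj)
next
  case (ev_Orc xs) then show ?case by (auto elim: evE_Orc)
qed

section \<open>Step-bounded evaluation\<close>

text \<open>\<open>run e ora t xs\<close> is \<open>Suc v\<close> when the computation of \<open>e\<close> on \<open>xs\<close> yields \<open>v\<close> with
  every unbounded search cut off at \<open>t\<close>, and \<open>0\<close> when it has not (yet) produced a value.\<close>
fun run_pr :: "(nat list \<Rightarrow> nat) \<Rightarrow> (nat list \<Rightarrow> nat) \<Rightarrow> nat \<Rightarrow> nat list \<Rightarrow> nat" where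
  "run_pr F G 0 ys = F ys"
| "run_pr F G (Suc m) ys = (let u = run_pr F G m ys in if u = 0 then 0 else G (m # (u - 1) # ys))"

fun run_mu :: "(nat list \<Rightarrow> nat) \<Rightarrow> nat list \<Rightarrow> nat \<Rightarrow> nat" where
  "run_mu F xs 0 = 0"
| "run_mu F xs (Suc m) = (let s = run_mu F xs m in if s \<noteq> 0 then s else
     (let z = F (m # xs) in if z = 0 then 1 else if z = 1 then m + 2 else 0))"

primrec run :: "rf \<Rightarrow> (nat \<Rightarrow> nat) \<Rightarrow> nat \<Rightarrow> nat list \<Rightarrow> nat" where
  "run Zr ora t xs = 1"
| "run Sc ora t xs = Suc (Suc (arg0 xs))"
| "run (Pj i) ora t xs = Suc (if i < length xs then xs ! i else 0)"
| "run (Cn f gs) ora t xs = (let zs = map (\<lambda>g. run g ora t xs) gs in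
     if 0 \<in> set zs then 0 else run f ora t (map (\<lambda>z. z - 1) zs))"
| "run (Pr f g) ora t xs = (case xs of [] \<Rightarrow> 0 | n # ys \<Rightarrow> run_pr (run f ora t) (run g ora t) n ys)"
| "run (Mn f) ora t xs = run_mu (run f ora t) xs t - 1"
| "run Orc ora t xs = (if ora (arg0 xs) < 2 then Suc (ora (arg0 xs)) else 0)"

lemma run_pr_sound:
  assumes "\<And>ys v. F ys = Suc v \<Longrightarrow> ev_partial ora f ys v"
    and "\<And>ys v. G ys = Suc v \<Longrightarrow> ev_partial ora g ys v"
  shows "run_pr F G n ys = Suc v \<Longrightarrow> ev_partial ora (Pr f g) (n # ys) v"
proof (induction n arbitrary: v)
  case 0 then show ?case using assms(1) by (auto intro: ev_partial_Pr0)
next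
  case (Suc n)
  then obtain u where u: "run_pr F G n ys = Suc u" "G (n # u # ys) = Suc v"
    by (cases "run_pr F G n ys") (auto simp: Let_def)
  then show ?case using Suc.IH assms(2) by (auto intro: ev_partial_PrS)
qed

lemma run_mu_found:
  "run_mu F xs t = Suc (Suc n) \<Longrightarrow> F (n # xs) = 1 \<and> (\<forall>m<n. F (m # xs) \<ge> 2) \<and> n < t"
proof (induction t arbitrary: n)
  case 0 then show ?case by simp
next
  case (Suc t)
  show ?case
  proof (cases "run_mu F xs t = 0")
    case False
    then show ?thesis using Suc by (auto simp: Let_def)
  next
    case True
    have z: "\<forall>m<t. F (m # xs) \<ge> 2" using True
    proof (induction t)
      case 0 then show ?case by simp
    next
      case (Suc t)
      then have "run_mu F xs t = 0" by (auto simp: Let_def split: if_splits)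
      moreover from Suc.prems this have "F (t # xs) \<ge> 2" by (auto simp: Let_def split: if_splits)
      ultimately show ?case using Suc.IH less_Suc_eq by auto
    qed
    from Suc.prems True have "n = t" "F (t # xs) = 1" by (auto simp: Let_def split: if_splits)
    then show ?thesis using z by auto
  qed
qed

lemma run_sound: "run e ora t xs = Suc v \<Longrightarrow> ev_partial ora e xs v"
proof (induction e arbitrary: xs v)
  case Zr then show ?case using ev_partial_Zr by simp
next
  case Sc then show ?case using ev_partial_Sc[of ora xs] by simp
next
  case (Pj i) then show ?case using ev_partial_Pj[of ora i xs] by simp
next
  case Orc then show ?case using ev_partial_Orc[of ora xs] by (auto split: if_splits)
next
  case (Cn f gs)
  define zs where "zs = map (\<lambda>g. run g ora t xs) gs"
  have nz: "0 \<notin> set zs" and fv: "run f ora t (map (\<lambda>z. z - 1) zs) = Suc v"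
    using Cn.prems by (auto simp: zs_def Let_def split: if_splits)
  show ?case
  proof (rule ev_partial_Cn)
    show "length (map (\<lambda>z. z - 1) zs) = length gs" by (simp add: zs_def)
    show "\<forall>i<length gs. ev_partial ora (gs ! i) xs (map (\<lambda>z. z - 1) zs ! i)"
    proof (intro allI impI)
      fix i assume i: "i < length gs"
      have "zs ! i \<in> set zs" using i by (simp add: zs_def)
      then have "zs ! i \<noteq> 0" using nz by metis
      then have "run (gs ! i) ora t xs = Suc (map (\<lambda>z. z - 1) zs ! i)" using i by (simp add: zs_def)
      then show "ev_partial ora (gs ! i) xs (map (\<lambda>z. z - 1) zs ! i)" using Cn.IH(2) i
        by (meson nth_mem)
    qed
    show "ev_partial ora f (map (\<lambda>z. z - 1) zs) v" using Cn.IH(1) fv by blast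
  qed
next
  case (Pr f g)
  then obtain n ys where xs: "xs = n # ys" by (cases xs) auto
  then show ?case using Pr run_pr_sound[of "run f ora t" ora f "run g ora t" g n ys v] by simp
next
  case (Mn f)
  then have "run_mu (run f ora t) xs t = Suc (Suc v)" by simp
  from run_mu_found[OF this] have a: "run f ora t (v # xs) = Suc 0" and b:
    "\<forall>m<v. run f ora t (m # xs) \<ge> 2" by auto
  show ?case
  proof (rule ev_partial_Mn)
    show "ev_partial ora f (v # xs) 0" using Mn.IH a by blast
    show "\<forall>m<v. \<exists>u. u \<noteq> 0 \<and> ev_partial ora f (m # xs) u"
    proof (intro allI impI)
      fix m assume "m < v"
      then have "run f ora t (m # xs) \<ge> 2" using b by blast
      then obtain u where u: "run f ora t (m # xs) = Suc u" "u \<noteq> 0"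
        by (cases "run f ora t (m # xs)") auto
      then show "\<exists>u. u \<noteq> 0 \<and> ev_partial ora f (m # xs) u" using Mn.IH by blast
    qed
  qed
qed

lemma run_mu_zero: "(\<forall>m<n. F (m # xs) \<ge> 2) \<Longrightarrow> t \<le> n \<Longrightarrow> run_mu F xs t = 0"
proof (induction t)
  case 0 then show ?case by simp
next
  case (Suc t)
  have f2: "F (t # xs) \<ge> 2" using Suc.prems by auto
  have "run_mu F xs t = 0" using Suc by auto
  then show ?case using f2 by (simp add: Let_def)
qed

lemma run_mu_find:
  assumes "\<forall>m<n. F (m # xs) \<ge> 2" "F (n # xs) = 1" "n < t"
  shows "run_mu F xs t = Suc (Suc n)"
  using assms(3)
proof (induction t)
  case 0 then show ?case by simp
next
  case (Suc t)
  show ?case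
  proof (cases "n < t")
    case True then show ?thesis using Suc by (simp add: Let_def)
  next
    case False
    then have "t = n" using Suc by simp
    then show ?thesis using run_mu_zero[OF assms(1), of n] assms(2) by (simp add: Let_def)
  qed
qed

lemma run_complete:
  assumes "ev_partial ora e xs v"
  shows "eventually (\<lambda>t. run e ora t xs = Suc v) sequentially"
  using assms
proof (induction rule: ev_partial.induct)
  case (ev_partial_Cn ys gs xs f v)
  have "eventually (\<lambda>t. \<forall>i\<in>{..<length gs}. run (gs ! i) ora t xs = Suc (ys ! i)) sequentially"
    using ev_partial_Cn.IH(1) by (intro eventually_ball_finite) auto
  with ev_partial_Cn.IH(2) show ?case
  proof eventually_elim
    case (elim t)
    then have "map (\<lambda>g. run g ora t xs) gs = map Suc ys"
      using ev_partial_Cn.hyps(1) by (intro nth_equalityI) auto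
    moreover have "map (\<lambda>z. z - 1) (map Suc ys) = ys" by (induction ys) auto
    ultimately show ?case using elim by (simp add: Let_def)
  qed
next
  case (ev_partial_PrS f g n xs u v)
  from ev_partial_PrS.IH show ?case by eventually_elim (simp add: Let_def)
next
  case (ev_partial_Mn f n xs)
  have "\<forall>m\<in>{..<n}. eventually (\<lambda>t. run f ora t (m # xs) \<ge> 2) sequentially"
  proof
    fix m assume "m \<in> {..<n}"
    then obtain u where "u \<noteq> 0" and ev_u:
      "eventually (\<lambda>t. run f ora t (m # xs) = Suc u) sequentially"
      using ev_partial_Mn.IH(2) by auto
    from ev_u show "eventually (\<lambda>t. run f ora t (m # xs) \<ge> 2) sequentially"
      by (rule eventually_mono) (use \<open>u \<noteq> 0\<close> in simp)
  qed
  then have "eventually (\<lambda>t. \<forall>m\<in>{..<n}. run f ora t (m # xs) \<ge> 2) sequentially"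
    by (rule eventually_ball_finite[OF finite_lessThan])
  with ev_partial_Mn.IH(1) eventually_gt_at_top[of n] show ?case
  proof eventually_elim
    case (elim t)
    then have "run_mu (run f ora t) xs t = Suc (Suc n)" by (intro run_mu_find) auto
    then show ?case by simp
  qed
qed simp_all

lemma drop_map: "length L = j + n \<Longrightarrow> drop j L = map (\<lambda>i. L ! (i + j)) [0..<n]"
  by (rule nth_equalityI) (auto simp: add.commute)

lemma run_pr_rec:
  "run_pr F G n ys = rec_nat (F ys) (\<lambda>m u. if u = 0 then 0 else G (m # (u - 1) # ys)) n"
  by (induction n) (auto simp: Let_def)

lemma run_mu_rec: "run_mu F xs t = rec_nat 0 (\<lambda>m s. if s \<noteq> 0 then s else
     (if F (m # xs) = 0 then 1 else if F (m # xs) = 1 then m + 2 else 0)) t"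
  by (induction t) (auto simp: Let_def)

lemma decidable_all_nz: "r \<le> m \<Longrightarrow> decidable A (m + 2) (\<lambda>M. \<forall>i<r. M ! (i + 2) \<noteq> 0)"
proof (induction r)
  case 0 then show ?case using decidable_const[of A "m+2" True] by simp
next
  case (Suc r)
  have "decidable A (m + 2) (\<lambda>M. (\<forall>i<r. M ! (i + 2) \<noteq> 0) \<and> M ! (r + 2) \<noteq> 0)"
    using Suc by (intro decidable_and decidable_ne computable_var computable_const) auto
  then show ?case by (rule decidable_cong) (auto simp: less_Suc_eq)
qed

definition run_computable :: "nat set \<Rightarrow> (nat \<Rightarrow> nat \<Rightarrow> nat) \<Rightarrow> rf \<Rightarrow> bool" where
  "run_computable A orc e \<longleftrightarrow>
     (\<forall>k. computable A (Suc (Suc k)) (\<lambda>L. run e (orc (L ! 0)) (L ! 1) (drop 2 L)))"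

lemma run_computable_comp:
  assumes e: "run_computable A orc e"
    and "computable A n C" "computable A n T" "\<forall>F\<in>set Fs. computable A n F"
  shows "computable A n (\<lambda>M. run e (orc (C M)) (T M) (map (\<lambda>F. F M) Fs))"
proof -
  have "computable A (length (C # T # Fs)) (\<lambda>L. run e (orc (L ! 0)) (L ! 1) (drop 2 L))"
    using e unfolding run_computable_def by simp
  then have "computable A n (\<lambda>M. (\<lambda>L. run e (orc (L ! 0)) (L ! 1) (drop 2 L))
    (map (\<lambda>F. F M) (C # T # Fs)))"
    by (rule computable_comp) (use assms(2-4) in auto)
  then show ?thesis by (simp add: numeral_2_eq_2)
qed

lemma run_computable_Cn:
  assumes f: "run_computable A orc f" and gs: "\<forall>g\<in>set gs. run_computable A orc g"
  shows "run_computable A orc (Cn f gs)"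
  unfolding run_computable_def
proof
  fix k
  define m where "m = length gs"
  have args_defined: "decidable A (m + 2) (\<lambda>M. \<forall>i<m. M ! (i + 2) \<noteq> 0)"
    by (rule decidable_all_nz) simp
  have run_f_args: "computable A (m + 2) (\<lambda>M. run f (orc (M ! 0)) (M ! 1)
    (map (\<lambda>z. z - 1) (drop 2 M)))"
  proof -
    have "computable A (m + 2)
        (\<lambda>M. run f (orc (M ! 0)) (M ! 1) (map (\<lambda>F. F M) (map (\<lambda>i M. M ! (i + 2) - 1) [0..<m])))"
      by (rule run_computable_comp[OF f]) (auto intro!: computable_var computable_monus
        computable_const)
    then show ?thesis
      by (rule computable_cong) (simp add: drop_map[of _ 2 m] comp_def)
  qed
  define G where "G M = (if \<forall>i<m. M ! (i + 2) \<noteq> 0 then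
      run f (orc (M ! 0)) (M ! 1) (map (\<lambda>z. z - 1) (drop 2 M)) else 0)" for M
  have G_computable: "computable A (m + 2) G" unfolding G_def
    by (intro computable_if args_defined run_f_args computable_const)
  let ?Fs = "[\<lambda>L. L ! 0, \<lambda>L. L ! 1] @ map (\<lambda>g L. run g (orc (L ! 0)) (L ! 1) (drop 2 L)) gs"
  have "\<forall>F\<in>set ?Fs. computable A (Suc (Suc k)) F" using gs unfolding run_computable_def
    by (auto intro!: computable_var)
  moreover have "computable A (length ?Fs) G" using G_computable by (simp add: m_def)
  ultimately have "computable A (Suc (Suc k)) (\<lambda>L. G (map (\<lambda>F. F L) ?Fs))" using computable_comp
    by blast
  then show "computable A (Suc (Suc k)) (\<lambda>L. run (Cn f gs) (orc (L ! 0)) (L ! 1) (drop 2 L))"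
  proof (rule computable_cong)
    fix L :: "nat list"
    define zs where "zs = map (\<lambda>g. run g (orc (L ! 0)) (L ! 1) (drop 2 L)) gs"
    have lz: "length zs = m" by (simp add: zs_def m_def)
    have e: "map (\<lambda>F. F L) ?Fs = L ! 0 # L ! 1 # zs" by (simp add: zs_def comp_def)
    have iff: "(\<forall>i<m. (L ! 0 # L ! 1 # zs) ! (i + 2) \<noteq> 0) \<longleftrightarrow> 0 \<notin> set zs"
      using lz by (auto simp: in_set_conv_nth numeral_2_eq_2)
    have c: "run (Cn f gs) (orc (L ! 0)) (L ! 1) (drop 2 L) =
      (if 0 \<in> set zs then 0 else run f (orc (L ! 0)) (L ! 1) (map (\<lambda>z. z - 1) zs))"
      unfolding zs_def by (simp only: run.simps Let_def)
    have d: "drop 2 (L ! 0 # L ! 1 # zs) = zs" by (simp add: numeral_2_eq_2)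
    show "G (map (\<lambda>F. F L) ?Fs) = run (Cn f gs) (orc (L ! 0)) (L ! 1) (drop 2 L)"
      unfolding e G_def c d using iff by simp
  qed
qed

lemma run_computable_Pr:
  assumes f: "run_computable A orc f" and g: "run_computable A orc g"
  shows "run_computable A orc (Pr f g)"
  unfolding run_computable_def
proof
  fix k
  show "computable A (Suc (Suc k)) (\<lambda>L. run (Pr f g) (orc (L ! 0)) (L ! 1) (drop 2 L))"
  proof (cases k)
    case 0
    have "computable A (Suc (Suc k)) (\<lambda>L. 0)" by (rule computable_const)
    then show ?thesis by (rule computable_cong) (auto simp: 0)
  next
    case (Suc k')
    have run_f: "computable A (k' + 2) (\<lambda>L. run f (orc (L ! 0)) (L ! 1) (drop 2 L))" using f
      unfolding run_computable_def add_2_eq_Suc' by blast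
    define Gs where "Gs M = (if M ! 1 = 0 then 0 else run g (orc (M ! 2)) (M ! 3)
      (M ! 0 # (M ! 1 - 1) # drop 4 M))" for M
    have run_g_args: "computable A (k' + 4) (\<lambda>M. run g (orc (M ! 2)) (M ! 3)
      (M ! 0 # (M ! 1 - 1) # drop 4 M))"
    proof -
      have "computable A (k' + 4) (\<lambda>M. run g (orc (M ! 2)) (M ! 3)
          (map (\<lambda>F. F M) ([\<lambda>M. M ! 0, \<lambda>M. M ! 1 - 1] @ map (\<lambda>i M. M ! (i + 4)) [0..<k'])))"
        by (rule run_computable_comp[OF g]) (auto intro!: computable_var computable_monus
          computable_const)
      then show ?thesis
        by (rule computable_cong) (simp add: drop_map[of _ 4 k'] comp_def)
    qed
    have Gs_computable: "computable A (Suc (Suc (k' + 2))) Gs" unfolding Gs_def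
      using run_g_args by (intro computable_if decidable_eq computable_var computable_const)
        (auto simp: numeral_eq_Suc)
    have recursion: "computable A (Suc (k' + 2)) (\<lambda>N. rec_nat
      ((\<lambda>L. run f (orc (L ! 0)) (L ! 1) (drop 2 L)) (tl N))
        (\<lambda>m u. Gs (m # u # tl N)) (hd N))"
      by (rule computable_rec_nat[OF run_f Gs_computable])
    let ?Fs = "[\<lambda>L. L ! 2, \<lambda>L. L ! 0, \<lambda>L. L ! 1] @ map (\<lambda>i L. L ! (i + 3)) [0..<k']"
    have "computable A (length ?Fs) (\<lambda>N. rec_nat
      ((\<lambda>L. run f (orc (L ! 0)) (L ! 1) (drop 2 L)) (tl N))
        (\<lambda>m u. Gs (m # u # tl N)) (hd N))" using recursion by (simp add: numeral_eq_Suc)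
    moreover have "\<forall>F\<in>set ?Fs. computable A (Suc (Suc k)) F"
      by (auto intro!: computable_var simp: Suc)
    ultimately have "computable A (Suc (Suc k)) (\<lambda>L.
      (\<lambda>N. rec_nat ((\<lambda>L. run f (orc (L ! 0)) (L ! 1) (drop 2 L)) (tl N))
        (\<lambda>m u. Gs (m # u # tl N)) (hd N)) (map (\<lambda>F. F L) ?Fs))" by (rule computable_comp)
    then show ?thesis
    proof (rule computable_cong)
      fix L :: "nat list" assume len: "length L = Suc (Suc k)"
      have d3: "drop 3 L = map (\<lambda>i. L ! (i + 3)) [0..<k']" using len Suc by (intro drop_map) simp
      have l2: "2 < length L" using len Suc by simp
      have d2': "drop 2 L = L ! 2 # drop (Suc 2) L" using Cons_nth_drop_Suc[OF l2] by simp
      have d2: "drop 2 L = L ! 2 # drop 3 L" using d2' by (simp add: numeral_3_eq_3)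
      have e: "map (\<lambda>F. F L) ?Fs = L ! 2 # L ! 0 # L ! 1 # drop 3 L" by (simp add: d3 comp_def)
      show "(\<lambda>N. rec_nat ((\<lambda>L. run f (orc (L ! 0)) (L ! 1) (drop 2 L)) (tl N))
        (\<lambda>m u. Gs (m # u # tl N)) (hd N)) (map (\<lambda>F. F L) ?Fs) = run (Pr f g) (orc (L ! 0)) (L !
          1) (drop 2 L)"
        unfolding e d2 by (simp add: run_pr_rec Gs_def cong: if_cong)
    qed
  qed
qed

lemma run_computable_Mn:
  assumes f: "run_computable A orc f"
  shows "run_computable A orc (Mn f)"
  unfolding run_computable_def
proof
  fix k
  have run_f_args: "computable A (k + 4) (\<lambda>M. run f (orc (M ! 2)) (M ! 3) (M ! 0 # drop 4 M))"
  proof -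
    have "computable A (k + 4) (\<lambda>M. run f (orc (M ! 2)) (M ! 3)
        (map (\<lambda>F. F M) ([\<lambda>M. M ! 0] @ map (\<lambda>i M. M ! (i + 4)) [0..<k])))"
      by (rule run_computable_comp[OF f]) (auto intro!: computable_var)
    then show ?thesis
      by (rule computable_cong) (simp add: drop_map[of _ 4 k] comp_def)
  qed
  define Ms where "Ms M = (if M ! 1 \<noteq> 0 then M ! 1 else
     (if run f (orc (M ! 2)) (M ! 3) (M ! 0 # drop 4 M) = 0 then 1
      else if run f (orc (M ! 2)) (M ! 3) (M ! 0 # drop 4 M) = 1 then M ! 0 + 2 else 0))" for M
  have Ms_computable: "computable A (Suc (Suc (k + 2))) Ms" unfolding Ms_def
    using run_f_args by (intro computable_if decidable_ne decidable_eq computable_var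
      computable_const computable_add) (auto simp: numeral_eq_Suc)
  have search: "computable A (Suc (k + 2)) (\<lambda>N. rec_nat ((\<lambda>L. 0) (tl N)) (\<lambda>m u. Ms (m # u # tl N))
    (hd N))"
    by (rule computable_rec_nat[OF computable_const Ms_computable])
  let ?Fs = "[\<lambda>L. L ! 1, \<lambda>L. L ! 0, \<lambda>L. L ! 1] @ map (\<lambda>i L. L ! (i + 2)) [0..<k]"
  have "computable A (length ?Fs) (\<lambda>N. rec_nat ((\<lambda>L. 0) (tl N)) (\<lambda>m u. Ms (m # u # tl N)) (hd N))"
    using search by (simp add: numeral_eq_Suc)
  moreover have "\<forall>F\<in>set ?Fs. computable A (Suc (Suc k)) F" by (auto intro!: computable_var)
  ultimately have "computable A (Suc (Suc k)) (\<lambda>L.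
    (\<lambda>N. rec_nat ((\<lambda>L. 0) (tl N)) (\<lambda>m u. Ms (m # u # tl N)) (hd N)) (map (\<lambda>F. F L) ?Fs))"
    by (rule computable_comp)
  then have "computable A (Suc (Suc k)) (\<lambda>L.
    (\<lambda>N. rec_nat ((\<lambda>L. 0) (tl N)) (\<lambda>m u. Ms (m # u # tl N)) (hd N)) (map (\<lambda>F. F L) ?Fs) - 1)"
    by (intro computable_monus computable_const)
  then show "computable A (Suc (Suc k)) (\<lambda>L. run (Mn f) (orc (L ! 0)) (L ! 1) (drop 2 L))"
  proof (rule computable_cong)
    fix L :: "nat list" assume len: "length L = Suc (Suc k)"
    have d2: "drop 2 L = map (\<lambda>i. L ! (i + 2)) [0..<k]" using len by (intro drop_map) simp
    have e: "map (\<lambda>F. F L) ?Fs = L ! 1 # L ! 0 # L ! 1 # drop 2 L" by (simp add: d2 comp_def)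
    show "(\<lambda>N. rec_nat ((\<lambda>L. 0) (tl N)) (\<lambda>m u. Ms (m # u # tl N)) (hd N)) (map (\<lambda>F. F L) ?Fs) - 1
       = run (Mn f) (orc (L ! 0)) (L ! 1) (drop 2 L)"
      unfolding e by (simp add: run_mu_rec Ms_def cong: if_cong)
  qed
qed

lemma run_computable:
  assumes orc: "computable2 A orc"
  shows "run_computable A orc e"
proof (induction e)
  case Zr
  show ?case unfolding run_computable_def by (simp add: computable_const)
next
  case Sc
  show ?case unfolding run_computable_def
  proof
    fix k
    show "computable A (Suc (Suc k)) (\<lambda>L. run Sc (orc (L ! 0)) (L ! 1) (drop 2 L))"
    proof (cases k)
      case 0
      have "computable A (Suc (Suc k)) (\<lambda>L. 2)" by (rule computable_const)
      then show ?thesis by (rule computable_cong) (auto simp: 0 arg0_def)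
    next
      case (Suc k')
      have "computable A (Suc (Suc k)) (\<lambda>L. Suc (Suc (L ! 2)))"
        by (intro computable_suc computable_var) (simp add: Suc)
      then show ?thesis by (rule computable_cong) (auto simp: Suc arg0_def hd_drop_conv_nth)
    qed
  qed
next
  case (Pj i)
  show ?case unfolding run_computable_def
  proof
    fix k
    show "computable A (Suc (Suc k)) (\<lambda>L. run (Pj i) (orc (L ! 0)) (L ! 1) (drop 2 L))"
    proof (cases "i < k")
      case True
      have "computable A (Suc (Suc k)) (\<lambda>L. Suc (L ! (i + 2)))"
        by (intro computable_suc computable_var) (use True in simp)
      then show ?thesis by (rule computable_cong) (use True in \<open>auto simp: add.commute\<close>)
    next
      case False
      have "computable A (Suc (Suc k)) (\<lambda>L. 1)" by (rule computable_const)
      then show ?thesis by (rule computable_cong) (use False in auto)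
    qed
  qed
next
  case Orc
  show ?case unfolding run_computable_def
  proof
    fix k
    show "computable A (Suc (Suc k)) (\<lambda>L. run Orc (orc (L ! 0)) (L ! 1) (drop 2 L))"
    proof (cases k)
      case 0
      have "computable A (Suc (Suc k)) (\<lambda>L. if orc (L ! 0) 0 < 2 then Suc (orc (L ! 0) 0) else 0)"
        by (intro computable_if decidable_less computable_suc computable2_app[OF orc]
          computable_var computable_const) auto
      then show ?thesis by (rule computable_cong) (auto simp: 0 arg0_def)
    next
      case (Suc k')
      have "computable A (Suc (Suc k))
          (\<lambda>L. if orc (L ! 0) (L ! 2) < 2 then Suc (orc (L ! 0) (L ! 2)) else 0)"
        by (intro computable_if decidable_less computable_suc computable2_app[OF orc]
          computable_var computable_const) (auto simp: Suc)
      then show ?thesis by (rule computable_cong) (auto simp: Suc arg0_def hd_drop_conv_nth)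
    qed
  qed
qed (auto intro: run_computable_Cn run_computable_Pr run_computable_Mn)

section \<open>Coding conditions\<close>

text \<open>The partial oracle for \<open>colset f \<oplus> P\<close> given by the code \<open>c\<close> of a condition: a
  pair \<open>{x, y}\<close> is answered from \<open>\<sigma>\<close> while \<open>y\<close> lies in the condition and is undefined
  beyond it.\<close>
definition col_oracle :: "nat \<Rightarrow> nat \<Rightarrow> nat" where
  "col_oracle c b = (if pfst b < psnd b then
      (if (tl_code ^^ psnd b) (psnd c) \<noteq> 0 then
        (if nth_code (nth_code (pfst c) (psnd b)) (pfst b) = 1 then 1 else 0) else 2)
    else 0)"

definition cond_oracle :: "nat set \<Rightarrow> nat \<Rightarrow> nat \<Rightarrow> nat" where
  "cond_oracle P c a = (if a mod 2 = 0 then col_oracle c (a div 2) else chi P (a div 2))"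

lemma computable_chi: "computable A k F \<Longrightarrow> computable A k (\<lambda>xs. chi A (F xs))"
proof -
  assume "computable A k F"
  moreover have "computable1 A (chi A)" using computable_oracle[of A]
    unfolding computable1_def chi_def .
  ultimately show ?thesis using computable1_app by blast
qed

lemma computable_col_oracle:
  "computable A k C \<Longrightarrow> computable A k B \<Longrightarrow> computable A k (\<lambda>xs. col_oracle (C xs) (B xs))"
  unfolding col_oracle_def
  by (intro computable_if decidable_less decidable_ne decidable_eq computable_const
    computable1_app[OF computable1_pfst] computable1_app[OF computable1_psnd]
    computable_tl_code_iter computable_nth_code; assumption?)

lemma computable_cond_oracle:
  "computable P k C \<Longrightarrow> computable P k B \<Longrightarrow> computable P k (\<lambda>xs. cond_oracle P (C xs) (B xs))"
  unfolding cond_oracle_def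
  by (intro computable_if decidable_eq computable_col_oracle computable_chi
    computable1_app[OF computable1_mod2] computable1_app[OF computable1_div2] computable_const;
    assumption?)

lemma computable2_cond_oracle: "computable2 P (cond_oracle P)"
  unfolding computable2_def by (intro computable_cond_oracle computable_var) simp_all

definition cdecode :: "nat \<Rightarrow> cond" where
  "cdecode c = (map list_decode (list_decode (pfst c)), map prod_decode (list_decode (psnd c)))"

lemma pfst_psnd_inv: "prod_encode (pfst c, psnd c) = c"
  by (simp add: pfst_def psnd_def)

lemma ccode_cdecode[simp]: "ccode (cdecode c) = c"
proof -
  have "map list_encode (map list_decode (list_decode (pfst c))) = list_decode (pfst c)"
    by (induction "list_decode (pfst c)") (simp_all add: map_idI)
  moreover have "map prod_encode (map prod_decode (list_decode (psnd c))) = list_decode (psnd c)"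
    by (simp add: map_idI)
  ultimately show ?thesis
    by (simp add: ccode_def cdecode_def pfst_psnd_inv)
qed

lemma cdecode_ccode[simp]: "cdecode (ccode q) = q"
proof -
  have "map list_decode (map list_encode (fst q)) = fst q" by (simp add: map_idI)
  moreover have "map prod_decode (map prod_encode (snd q)) = snd q" by (simp add: map_idI)
  ultimately show ?thesis by (simp add: ccode_def cdecode_def)
qed

lemma pfst_ccode: "pfst (ccode q) = list_encode (map list_encode (fst q))"
  by (simp add: ccode_def)

lemma psnd_ccode: "psnd (ccode q) = list_encode (map prod_encode (snd q))"
  by (simp add: ccode_def)

definition in_sig :: "nat \<Rightarrow> nat \<Rightarrow> bool" where "in_sig c x \<longleftrightarrow> (tl_code ^^ x) (pfst c) \<noteq> 0"
definition in_lab :: "nat \<Rightarrow> nat \<Rightarrow> bool" where "in_lab c x \<longleftrightarrow> (tl_code ^^ x) (psnd c) \<noteq> 0"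
definition sig_row :: "nat \<Rightarrow> nat \<Rightarrow> nat" where "sig_row c y = nth_code (pfst c) y"
definition in_row :: "nat \<Rightarrow> nat \<Rightarrow> nat \<Rightarrow> bool" where "in_row c y x \<longleftrightarrow>
  (tl_code ^^ x) (sig_row c y) \<noteq> 0"
definition sig_at :: "nat \<Rightarrow> nat \<Rightarrow> nat \<Rightarrow> nat" where "sig_at c x y = nth_code (sig_row c y) x"
definition lab_at :: "nat \<Rightarrow> nat \<Rightarrow> nat" where "lab_at c x = nth_code (psnd c) x"

lemma in_sig_ccode: "in_sig (ccode q) x \<longleftrightarrow> x < length (fst q)"
  unfolding in_sig_def pfst_ccode tl_code_iter_ne by simp

lemma in_lab_ccode: "in_lab (ccode q) x \<longleftrightarrow> x < clen q"
  unfolding in_lab_def psnd_ccode tl_code_iter_ne by (simp add: clen_def)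

lemma sig_row_ccode: "y < length (fst q) \<Longrightarrow> sig_row (ccode q) y = list_encode (fst q ! y)"
  by (simp add: sig_row_def pfst_ccode nth_code_list_encode)

lemma in_row_ccode: "y < length (fst q) \<Longrightarrow> in_row (ccode q) y x \<longleftrightarrow> x < length (fst q ! y)"
  unfolding in_row_def sig_row_ccode tl_code_iter_ne by simp

lemma sig_at_ccode:
  "y < length (fst q) \<Longrightarrow> x < length (fst q ! y) \<Longrightarrow> sig_at (ccode q) x y = csig q x y"
  by (simp add: sig_at_def sig_row_ccode nth_code_list_encode csig_def)

lemma lab_at_ccode: "x < clen q \<Longrightarrow> lab_at (ccode q) x = prod_encode (clab q x)"
  by (simp add: lab_at_def psnd_ccode nth_code_list_encode clen_def clab_def)

lemma sig_at_ccode_cond: "is_cond q \<Longrightarrow> x < y \<Longrightarrow> y < clen q \<Longrightarrow> sig_at (ccode q) x y = csig q x y"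
  by (rule sig_at_ccode) (auto simp: is_cond_def)

text \<open>The clauses of \<open>is_cond\<close> and \<open>cle\<close>, checked one index pair at a time, so that
  being (the code of) a condition extending another one is \<open>\<Pi>\<^sup>0\<^sub>1\<close>.\<close>
definition cond_check :: "nat \<Rightarrow> nat \<Rightarrow> nat \<Rightarrow> bool" where
  "cond_check c x y \<longleftrightarrow> (in_sig c x \<longleftrightarrow> in_lab c x) \<and>
     (in_lab c y \<and> in_sig c y \<longrightarrow> (in_row c y x \<longleftrightarrow> x < y)) \<and>
     (x < y \<and> in_lab c y \<and> in_sig c y \<and> in_row c y x \<longrightarrow> sig_at c x y < 2 \<and>
        (psnd (lab_at c x) \<le> y \<longrightarrow> sig_at c x y = pfst (lab_at c x))) \<and>
     (in_lab c x \<longrightarrow> pfst (lab_at c x) < 2)"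

lemma nat_lt_iff_eq: "(\<forall>x::nat. x < a \<longleftrightarrow> x < b) \<Longrightarrow> a = b"
  by (metis less_irrefl nat_neq_iff)

lemma cond_check_iff: "is_cond q \<longleftrightarrow> (\<forall>x y. cond_check (ccode q) x y)"
proof
  assume c: "is_cond q"
  show "\<forall>x y. cond_check (ccode q) x y"
  proof (intro allI)
    fix x y
    have l: "length (fst q) = clen q" "\<forall>y<clen q. length (fst q ! y) = y" using c
      by (auto simp: is_cond_def)
    show "cond_check (ccode q) x y"
      unfolding cond_check_def
      using c l by (auto simp: in_sig_ccode in_lab_ccode in_row_ccode sig_at_ccode lab_at_ccode
        is_cond_def)
  qed
next
  assume a: "\<forall>x y. cond_check (ccode q) x y"
  have l1: "length (fst q) = clen q"
    by (rule nat_lt_iff_eq) (use a in \<open>auto simp: cond_check_def in_sig_ccode in_lab_ccode\<close>)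
  have l2: "\<forall>y<clen q. length (fst q ! y) = y"
  proof (intro allI impI)
    fix y assume "y < clen q"
    then show "length (fst q ! y) = y"
      by (intro nat_lt_iff_eq) (use a l1 in \<open>auto simp: cond_check_def in_sig_ccode in_lab_ccode
        in_row_ccode\<close>)
  qed
  have s: "\<forall>x y. x < y \<and> y < clen q \<longrightarrow> csig q x y < 2 \<and> (snd (clab q x) \<le> y \<longrightarrow>
    csig q x y = fst (clab q x))"
  proof (intro allI impI)
    fix x y assume xy: "x < y \<and> y < clen q"
    then have "cond_check (ccode q) x y" using a by blast
    then show "csig q x y < 2 \<and> (snd (clab q x) \<le> y \<longrightarrow> csig q x y = fst (clab q x))"
      using xy l1 l2 by (auto simp: cond_check_def in_sig_ccode in_lab_ccode in_row_ccode
        sig_at_ccode lab_at_ccode)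
  qed
  have lb: "\<forall>x<clen q. fst (clab q x) < 2"
  proof (intro allI impI)
    fix x assume "x < clen q"
    then show "fst (clab q x) < 2" using a[rule_format, of x 0]
      by (auto simp: cond_check_def in_lab_ccode lab_at_ccode)
  qed
  show "is_cond q" unfolding is_cond_def using l1 l2 s lb by blast
qed

definition cle_check :: "nat \<Rightarrow> nat \<Rightarrow> nat \<Rightarrow> nat \<Rightarrow> bool" where
  "cle_check r c x y \<longleftrightarrow> (in_lab c x \<longrightarrow> in_lab r x) \<and> (x < y \<and> in_lab c y \<longrightarrow>
    sig_at r x y = sig_at c x y) \<and>
     (in_lab c x \<longrightarrow> lab_at r x = lab_at c x)"

lemma cle_check_iff:
  assumes "is_cond r" "is_cond q"
  shows "cle r q \<longleftrightarrow> (\<forall>x y. cle_check (ccode r) (ccode q) x y)"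
proof
  assume "cle r q"
  then show "\<forall>x y. cle_check (ccode r) (ccode q) x y"
    using assms by (auto simp: cle_check_def cle_def in_lab_ccode sig_at_ccode_cond lab_at_ccode)
next
  assume a: "\<forall>x y. cle_check (ccode r) (ccode q) x y"
  have l: "clen q \<le> clen r"
    using a[rule_format, of "clen q - 1" 0]
      by (cases "clen q") (auto simp: cle_check_def in_lab_ccode)
  have "\<forall>x y. x < y \<and> y < clen q \<longrightarrow> csig r x y = csig q x y"
    using a l assms by (auto simp: cle_check_def in_lab_ccode sig_at_ccode_cond)
  moreover have "\<forall>x<clen q. clab r x = clab q x"
    using a l assms by (auto simp: cle_check_def in_lab_ccode lab_at_ccode)
  ultimately show "cle r q" using l by (simp add: cle_def)
qed

lemma decidable_in_sig:
  "computable A k C \<Longrightarrow> computable A k X \<Longrightarrow> decidable A k (\<lambda>xs. in_sig (C xs) (X xs))"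
  unfolding in_sig_def by (intro decidable_ne computable_tl_code_iter
    computable1_app[OF computable1_pfst] computable_const)

lemma decidable_in_lab:
  "computable A k C \<Longrightarrow> computable A k X \<Longrightarrow> decidable A k (\<lambda>xs. in_lab (C xs) (X xs))"
  unfolding in_lab_def by (intro decidable_ne computable_tl_code_iter
    computable1_app[OF computable1_psnd] computable_const)

lemma computable_sig_row:
  "computable A k C \<Longrightarrow> computable A k Y \<Longrightarrow> computable A k (\<lambda>xs. sig_row (C xs) (Y xs))"
  unfolding sig_row_def by (intro computable_nth_code computable1_app[OF computable1_pfst])

lemma decidable_in_row:
  "computable A k C \<Longrightarrow> computable A k Y \<Longrightarrow> computable A k X \<Longrightarrow>
    decidable A k (\<lambda>xs. in_row (C xs) (Y xs) (X xs))"
  unfolding in_row_def by (intro decidable_ne computable_tl_code_iter computable_sig_row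
    computable_const)

lemma computable_sig_at:
  "computable A k C \<Longrightarrow> computable A k X \<Longrightarrow> computable A k Y \<Longrightarrow>
    computable A k (\<lambda>xs. sig_at (C xs) (X xs) (Y xs))"
  unfolding sig_at_def by (intro computable_nth_code computable_sig_row)

lemma computable_lab_at:
  "computable A k C \<Longrightarrow> computable A k X \<Longrightarrow> computable A k (\<lambda>xs. lab_at (C xs) (X xs))"
  unfolding lab_at_def by (intro computable_nth_code computable1_app[OF computable1_psnd])

lemma decidable_cond_check:
  "computable A k C \<Longrightarrow> computable A k X \<Longrightarrow> computable A k Y \<Longrightarrow>
    decidable A k (\<lambda>xs. cond_check (C xs) (X xs) (Y xs))"
  unfolding cond_check_def
  by (intro decidable_and decidable_iff decidable_imp decidable_in_sig decidable_in_lab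
    decidable_in_row decidable_less decidable_le decidable_eq computable_sig_at computable_const
    computable1_app[OF computable1_pfst] computable1_app[OF computable1_psnd] computable_lab_at;
    assumption?)

lemma decidable_cle_check:
  "computable A k R \<Longrightarrow> computable A k C \<Longrightarrow> computable A k X \<Longrightarrow> computable A k Y \<Longrightarrow>
    decidable A k (\<lambda>xs. cle_check (R xs) (C xs) (X xs) (Y xs))"
  unfolding cle_check_def
  by (intro decidable_and decidable_imp decidable_in_lab decidable_less decidable_eq
    computable_sig_at computable_lab_at; assumption?)

lemma computable_run_oracle:
  assumes "computable P k C" "computable P k T" "computable P k N"
  shows "computable P k (\<lambda>xs. run e (cond_oracle P (C xs)) (T xs) [N xs])"
  using run_computable_comp[OF run_computable[OF computable2_cond_oracle] assms(1,2), of "[N]"]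
    assms(3)
  by simp

section \<open>Forcing and the decisive conditions\<close>

definition forces :: "nat set \<Rightarrow> rf \<Rightarrow> cond \<Rightarrow> nat \<Rightarrow> bool" where
  "forces P e q n \<longleftrightarrow> ev_partial (cond_oracle P (ccode q)) e [n] 1"

definition forces_bad_pair :: "nat set \<Rightarrow> rf \<Rightarrow> nat \<Rightarrow> cond \<Rightarrow> bool" where
  "forces_bad_pair P e col q \<longleftrightarrow> (\<exists>x y. x < clen q \<and> y < clen q \<and> x \<noteq> y \<and> fpair (csig q) x y \<noteq> col \<and>
      forces P e q (2 * x) \<and> forces P e q (2 * y + 1))"

definition forces_side_finite :: "nat set \<Rightarrow> rf \<Rightarrow> nat \<Rightarrow> cond \<Rightarrow> bool" where
  "forces_side_finite P e j q \<longleftrightarrow> (\<exists>a0. \<forall>r x. is_cond r \<and> cle r q \<and> a0 \<le> x \<longrightarrow>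
    \<not> forces P e r (2 * x + j))"

definition decisive :: "nat set \<Rightarrow> rf \<Rightarrow> nat \<Rightarrow> cond set" where
  "decisive P e col = {q. is_cond q \<and> (forces_bad_pair P e col q \<or> forces_side_finite P e 0 q \<or>
    forces_side_finite P e 1 q)}"

definition fpair_code :: "nat \<Rightarrow> nat \<Rightarrow> nat \<Rightarrow> nat" where
  "fpair_code c x y = (if x < y then sig_at c x y else sig_at c y x)"

definition bad_pair_matrix :: "nat set \<Rightarrow> rf \<Rightarrow> nat \<Rightarrow> nat \<Rightarrow> nat \<Rightarrow> bool" where
  "bad_pair_matrix P e col c w \<longleftrightarrow> in_lab c (pfst w) \<and> in_lab c (pfst (psnd w)) \<and>
    pfst w \<noteq> pfst (psnd w) \<and>
     fpair_code c (pfst w) (pfst (psnd w)) \<noteq> col \<and>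
     run e (cond_oracle P c) (psnd (psnd w)) [2 * pfst w] = 2 \<and>
     run e (cond_oracle P c) (psnd (psnd w)) [2 * pfst (psnd w) + 1] = 2"

definition side_finite_matrix :: "nat set \<Rightarrow> rf \<Rightarrow> nat \<Rightarrow> nat \<Rightarrow> nat \<Rightarrow> nat \<Rightarrow> nat \<Rightarrow> bool" where
  "side_finite_matrix P e j c a0 b d \<longleftrightarrow>
     \<not> cond_check (pfst b) (pfst d) (psnd d) \<or> \<not> cle_check (pfst b) c (pfst d) (psnd d) \<or>
     pfst (psnd b) < a0 \<or> run e (cond_oracle P (pfst b)) (psnd (psnd b)) [2 * pfst (psnd b) + j] \<noteq>
       2"

text \<open>In \<open>[c, a, b, d]\<close> the witness \<open>a = \<langle>0, w\<rangle>\<close> exhibits a bad pair, while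
  \<open>a = \<langle>j + 1, a0\<rangle>\<close> claims side \<open>j\<close> finite beyond \<open>a0\<close>; then \<open>b\<close> ranges over candidate
  extensions together with an element and a search bound, and \<open>d\<close> refutes that the
  candidate is an extension.\<close>
definition decisive_matrix :: "nat set \<Rightarrow> rf \<Rightarrow> nat \<Rightarrow> nat list \<Rightarrow> bool" where
  "decisive_matrix P e col xs \<longleftrightarrow> cond_check (xs ! 0) (pfst (pfst (xs ! 2))) (psnd (pfst (xs ! 2))) \<and>
     (pfst (xs ! 1) = 0 \<and> bad_pair_matrix P e col (xs ! 0) (psnd (xs ! 1)) \<or>
      pfst (xs ! 1) \<in> {1, 2} \<and>
      side_finite_matrix P e (pfst (xs ! 1) - 1) (xs ! 0) (psnd (xs ! 1)) (psnd (xs ! 2)) (xs ! 3))"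

lemma decidable_bad_pair_matrix:
  "computable P k C \<Longrightarrow> computable P k W \<Longrightarrow> decidable P k (\<lambda>xs. bad_pair_matrix P e col (C xs) (W xs))"
  unfolding bad_pair_matrix_def fpair_code_def
  by (intro decidable_and decidable_in_lab decidable_ne decidable_eq computable_if decidable_less
    computable_sig_at computable_run_oracle computable_mult computable_add computable_const
    computable1_app[OF computable1_pfst] computable1_app[OF computable1_psnd]; assumption?)

lemma decidable_side_finite_matrix:
  "computable P k J \<Longrightarrow> computable P k C \<Longrightarrow> computable P k A0 \<Longrightarrow> computable P k B \<Longrightarrow>
   computable P k D \<Longrightarrow> decidable P k (\<lambda>xs. side_finite_matrix P e (J xs) (C xs) (A0 xs) (B xs)
     (D xs))"
  unfolding side_finite_matrix_def
  by (intro decidable_or decidable_not decidable_cond_check decidable_cle_check decidable_less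
    decidable_ne computable_run_oracle computable_mult computable_add computable_const
    computable1_app[OF computable1_pfst] computable1_app[OF computable1_psnd]; assumption?)

lemma decidable_decisive_matrix: "decidable P 4 (decisive_matrix P e col)"
  unfolding decisive_matrix_def insert_iff empty_iff
  by (intro decidable_and decidable_or decidable_eq decidable_const decidable_cond_check
    computable_monus decidable_bad_pair_matrix decidable_side_finite_matrix computable_const
    computable_var
    computable1_app[OF computable1_pfst] computable1_app[OF computable1_psnd]) simp_all

lemma forces_eventually:
  assumes "forces P e q n"
  shows "eventually (\<lambda>t. run e (cond_oracle P (ccode q)) t [n] = 2) sequentially"
proof -
  have "eventually (\<lambda>t. run e (cond_oracle P (ccode q)) t [n] = Suc 1) sequentially"
    using assms unfolding forces_def by (rule run_complete)
  then show ?thesis by (simp add: numeral_2_eq_2)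
qed

lemma forces_iff: "forces P e q n \<longleftrightarrow> (\<exists>t. run e (cond_oracle P (ccode q)) t [n] = 2)"
proof
  assume "forces P e q n"
  then obtain T where "\<forall>t\<ge>T. run e (cond_oracle P (ccode q)) t [n] = 2"
    using forces_eventually unfolding eventually_sequentially by blast
  then show "\<exists>t. run e (cond_oracle P (ccode q)) t [n] = 2" by blast
next
  assume "\<exists>t. run e (cond_oracle P (ccode q)) t [n] = 2"
  then obtain t where "run e (cond_oracle P (ccode q)) t [n] = Suc 1" by (auto simp: numeral_2_eq_2)
  then show "forces P e q n" unfolding forces_def by (rule run_sound)
qed

lemma fpair_code_ccode:
  "is_cond q \<Longrightarrow> x < clen q \<Longrightarrow> y < clen q \<Longrightarrow> x \<noteq> y \<Longrightarrow> fpair_code (ccode q) x y = fpair (csig q) x y"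
  by (auto simp: fpair_code_def fpair_def sig_at_ccode_cond)

lemma forces_bad_pair_iff:
  assumes c: "is_cond q"
  shows "forces_bad_pair P e col q \<longleftrightarrow> (\<exists>w. bad_pair_matrix P e col (ccode q) w)"
proof
  assume "forces_bad_pair P e col q"
  then obtain x y where xy: "x < clen q" "y < clen q" "x \<noteq> y" "fpair (csig q) x y \<noteq> col"
    "forces P e q (2 * x)" "forces P e q (2 * y + 1)" unfolding forces_bad_pair_def by blast
  from eventually_conj[OF forces_eventually[OF xy(5)] forces_eventually[OF xy(6)]]
  obtain t where "run e (cond_oracle P (ccode q)) t [2 * x] = 2"
    "run e (cond_oracle P (ccode q)) t [2 * y + 1] = 2"
    unfolding eventually_sequentially by blast
  then have "bad_pair_matrix P e col (ccode q) (prod_encode (x, prod_encode (y, t)))"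
    unfolding bad_pair_matrix_def using xy c by (simp add: in_lab_ccode fpair_code_ccode)
  then show "\<exists>w. bad_pair_matrix P e col (ccode q) w" by blast
next
  assume "\<exists>w. bad_pair_matrix P e col (ccode q) w"
  then obtain w where w: "bad_pair_matrix P e col (ccode q) w" by blast
  define x where "x = pfst w"
  define y where "y = pfst (psnd w)"
  define t where "t = psnd (psnd w)"
  have h: "x < clen q" "y < clen q" "x \<noteq> y" "fpair_code (ccode q) x y \<noteq> col"
     "run e (cond_oracle P (ccode q)) t [2 * x] = 2"
       "run e (cond_oracle P (ccode q)) t [2 * y + 1] = 2"
    using w unfolding bad_pair_matrix_def x_def y_def t_def by (auto simp: in_lab_ccode)
  then have "fpair (csig q) x y \<noteq> col" using fpair_code_ccode[OF c] by simp
  then show "forces_bad_pair P e col q" unfolding forces_bad_pair_def using h forces_iff by blast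
qed

lemma all_pairs_iff: "(\<forall>d. R (pfst d) (psnd d)) \<longleftrightarrow> (\<forall>x y. R x y)"
proof
  assume "\<forall>d. R (pfst d) (psnd d)"
  then show "\<forall>x y. R x y" by (metis pfst_prod_encode psnd_prod_encode fst_conv snd_conv)
qed simp

lemma checks_iff_extension:
  assumes "is_cond q"
  shows "(\<forall>d. cond_check r (pfst d) (psnd d) \<and> cle_check r (ccode q) (pfst d) (psnd d)) \<longleftrightarrow>
    is_cond (cdecode r) \<and> cle (cdecode r) q"
  using cond_check_iff[of "cdecode r"] cle_check_iff[of "cdecode r" q] assms
  unfolding all_pairs_iff[where R = "\<lambda>x y. cond_check r x y \<and> cle_check r (ccode q) x y"]
  by auto

lemma forces_side_finite_iff:
  assumes q: "is_cond q"
  shows "forces_side_finite P e j q \<longleftrightarrow> (\<exists>a0. \<forall>b. \<exists>d. side_finite_matrix P e j (ccode q) a0 b d)"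
proof
  assume "forces_side_finite P e j q"
  then obtain a0 where a0: "\<forall>r x. is_cond r \<and> cle r q \<and> a0 \<le> x \<longrightarrow> \<not> forces P e r (2 * x + j)"
    unfolding forces_side_finite_def by blast
  have "\<exists>d. side_finite_matrix P e j (ccode q) a0 b d" for b
  proof (cases "is_cond (cdecode (pfst b)) \<and> cle (cdecode (pfst b)) q")
    case True
    then have "\<not> forces P e (cdecode (pfst b)) (2 * pfst (psnd b) + j) \<or> pfst (psnd b) < a0"
      using a0 not_le by blast
    then have "side_finite_matrix P e j (ccode q) a0 b 0"
      unfolding side_finite_matrix_def forces_iff by auto
    then show ?thesis ..
  next
    case False
    then show ?thesis
      unfolding side_finite_matrix_def checks_iff_extension[OF q, symmetric] by blast
  qed
  then show "\<exists>a0. \<forall>b. \<exists>d. side_finite_matrix P e j (ccode q) a0 b d" by blast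
next
  assume "\<exists>a0. \<forall>b. \<exists>d. side_finite_matrix P e j (ccode q) a0 b d"
  then obtain a0 where a0: "\<forall>b. \<exists>d. side_finite_matrix P e j (ccode q) a0 b d" by blast
  have "\<not> forces P e r (2 * x + j)" if r: "is_cond r" "cle r q" "a0 \<le> x" for r x
  proof
    assume "forces P e r (2 * x + j)"
    then obtain t where t: "run e (cond_oracle P (ccode r)) t [2 * x + j] = 2"
      unfolding forces_iff by blast
    obtain d where "side_finite_matrix P e j (ccode q) a0 (prod_encode
      (ccode r, prod_encode (x, t))) d"
      using a0 by blast
    moreover have "cond_check (ccode r) (pfst d) (psnd d) \<and>
      cle_check (ccode r) (ccode q) (pfst d) (psnd d)"
      using checks_iff_extension[OF q, of "ccode r"] r by simp
    ultimately show False using r(3) t unfolding side_finite_matrix_def by simp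
  qed
  then show "forces_side_finite P e j q" unfolding forces_side_finite_def by blast
qed

lemma decisive_iff:
  "q \<in> decisive P e col \<longleftrightarrow>
     is_cond q \<and> (forces_bad_pair P e col q \<or> (\<exists>j\<in>{0, 1}. forces_side_finite P e j q))"
  by (auto simp: decisive_def)

lemma decisive_imp_matrix:
  assumes "q \<in> decisive P e col"
  shows "\<exists>a. \<forall>b. \<exists>d. decisive_matrix P e col [ccode q, a, b, d]"
proof -
  have q: "is_cond q" and checks: "\<forall>x y. cond_check (ccode q) x y"
    using assms cond_check_iff by (auto simp: decisive_def)
  from assms consider "forces_bad_pair P e col q" | j where "j \<in> {0, 1}"
    "forces_side_finite P e j q"
    unfolding decisive_iff by blast
  then show ?thesis
  proof cases
    case 1
    then obtain w where "bad_pair_matrix P e col (ccode q) w" using forces_bad_pair_iff[OF q]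
      by blast
    then have "\<forall>b. decisive_matrix P e col [ccode q, prod_encode (0, w), b, 0]"
      using checks by (simp add: decisive_matrix_def)
    then show ?thesis by blast
  next
    case (2 j)
    then obtain a0 where a0: "\<forall>b. \<exists>d. side_finite_matrix P e j (ccode q) a0 b d"
      using forces_side_finite_iff[OF q] by blast
    have "\<exists>d. decisive_matrix P e col [ccode q, prod_encode (Suc j, a0), b, d]" for b
      using a0[rule_format, of "psnd b"] checks 2(1) by (auto simp: decisive_matrix_def)
    then show ?thesis by blast
  qed
qed

lemma matrix_imp_decisive:
  assumes a: "\<forall>b. \<exists>d. decisive_matrix P e col [c, a, b, d]"
  shows "cdecode c \<in> decisive P e col"
proof -
  have "cond_check c x y" for x y
    using a[rule_format, of "prod_encode (prod_encode (x, y), 0)"]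
      by (auto simp: decisive_matrix_def)
  then have q: "is_cond (cdecode c)" using cond_check_iff[of "cdecode c"] by simp
  obtain d where "decisive_matrix P e col [c, a, 0, d]" using a by blast
  then consider "pfst a = 0" "bad_pair_matrix P e col c (psnd a)" | "pfst a \<in> {1, 2}"
    unfolding decisive_matrix_def by force
  then show ?thesis
  proof cases
    case 1
    then have "forces_bad_pair P e col (cdecode c)" using forces_bad_pair_iff[OF q] by auto
    then show ?thesis using q unfolding decisive_iff by blast
  next
    case 2
    have "\<exists>d. side_finite_matrix P e (pfst a - 1) c (psnd a) b d" for b
      using a[rule_format, of "prod_encode (0, b)"] 2 unfolding decisive_matrix_def by force
    then have "forces_side_finite P e (pfst a - 1) (cdecode c)"
      using forces_side_finite_iff[OF q] by auto
    moreover have "pfst a - 1 \<in> {0, 1}" using 2 by auto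
    ultimately show ?thesis using q unfolding decisive_iff by blast
  qed
qed

lemma decisive_code_iff:
  "c \<in> ccode ` decisive P e col \<longleftrightarrow> (\<exists>a. \<forall>b. \<exists>d. decisive_matrix P e col [c, a, b, d])"
proof
  assume "c \<in> ccode ` decisive P e col"
  then show "\<exists>a. \<forall>b. \<exists>d. decisive_matrix P e col [c, a, b, d]" using decisive_imp_matrix by blast
next
  assume "\<exists>a. \<forall>b. \<exists>d. decisive_matrix P e col [c, a, b, d]"
  then have "cdecode c \<in> decisive P e col" using matrix_imp_decisive by blast
  then show "c \<in> ccode ` decisive P e col" by (metis ccode_cdecode image_eqI)
qed

lemma decisive_sigma3: "sigma3 P (ccode ` decisive P e col)"
proof -
  have "rec_rel P 4 (decisive_matrix P e col)"
    using decidable_decisive_matrix[of P e col]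
      unfolding decidable_def computable_def computes_def rec_rel_def by blast
  then show ?thesis unfolding sigma3_def using decisive_code_iff by blast
qed

definition sig_extends :: "cond \<Rightarrow> cond \<Rightarrow> bool" where
  "sig_extends q r \<longleftrightarrow> clen q \<le> clen r \<and> (\<forall>x y. x < y \<and> y < clen q \<longrightarrow> csig r x y = csig q x y)"

lemma cle_sig_extends: "cle r q \<Longrightarrow> sig_extends q r"
  by (simp add: cle_def sig_extends_def)

lemma cle_refl: "cle p p"
  by (simp add: cle_def)

lemma cle_trans: "cle r q \<Longrightarrow> cle q p \<Longrightarrow> cle r p"
  unfolding cle_def by (metis le_trans less_le_trans)

lemma cle_chain:
  assumes "\<And>s. cle (ps (Suc s)) (ps s)" and "s \<le> s'"
  shows "cle (ps s') (ps s)"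
  using assms(2)
proof (induction s' rule: dec_induct)
  case base then show ?case by (rule cle_refl)
next
  case (step n) then show ?case using assms(1) cle_trans by blast
qed

lemma join_iff: "a \<in> join B P \<longleftrightarrow> (if a mod 2 = 0 then a div 2 \<in> B else a div 2 \<in> P)"
proof (cases "a mod 2 = 0")
  case True
  then have "a = 2 * (a div 2)" "\<forall>y. a \<noteq> 2 * y + 1" by presburger+
  then show ?thesis using True unfolding join_def by force
next
  case False
  then have "a = 2 * (a div 2) + 1" "\<forall>y. a \<noteq> 2 * y" by presburger+
  then show ?thesis using False unfolding join_def by force
qed

lemma colset_iff: "b \<in> colset f \<longleftrightarrow> pfst b < psnd b \<and> f (pfst b) (psnd b) = 1"
proof
  assume "b \<in> colset f"
  then show "pfst b < psnd b \<and> f (pfst b) (psnd b) = 1" unfolding colset_def by auto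
next
  assume "pfst b < psnd b \<and> f (pfst b) (psnd b) = 1"
  moreover have "b = prod_encode (pfst b, psnd b)" by (simp add: pfst_psnd_inv)
  ultimately show "b \<in> colset f" unfolding colset_def by blast
qed

lemma psnd_le: "psnd b \<le> b"
  by (metis le_prod_encode_2 pfst_psnd_inv)

lemma cond_oracle_cond:
  assumes "is_cond q"
  shows "cond_oracle P (ccode q) a = (if a mod 2 = 0 then
      (if pfst (a div 2) < psnd (a div 2) then
        (if psnd (a div 2) < clen q then
          (if csig q (pfst (a div 2)) (psnd (a div 2)) = 1 then 1 else 0) else 2)
       else 0)
     else chi P (a div 2))"
proof -
  have "sig_at (ccode q) x y = csig q x y" if "x < y" "y < clen q" for x y
    using sig_at_ccode_cond[OF assms that] .
  then show ?thesis
    unfolding cond_oracle_def col_oracle_def using in_lab_ccode[of q]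
    by (auto simp: in_lab_def sig_at_def sig_row_def)
qed

lemma cond_oracle_below_clen:
  assumes "is_cond q" "a < clen q"
  shows "cond_oracle P (ccode q) a < 2"
proof -
  have "psnd (a div 2) < clen q" using assms(2) psnd_le[of "a div 2"] by linarith
  then show ?thesis using cond_oracle_cond[OF assms(1)] by (auto simp: chi_def)
qed

lemma cond_oracle_approx:
  assumes "is_cond q" and approx: "\<And>x y. x < y \<Longrightarrow> y < clen q \<Longrightarrow> f x y = csig q x y"
    and "cond_oracle P (ccode q) a < 2"
  shows "cond_oracle P (ccode q) a = chi (join (colset f) P) a"
  using assms(3) approx[of "pfst (a div 2)" "psnd (a div 2)"]
  unfolding cond_oracle_cond[OF assms(1)] chi_def join_iff colset_iff by (auto split: if_splits)

lemma cond_oracle_mono: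
  assumes "is_cond q" "is_cond r" "sig_extends q r" "cond_oracle P (ccode q) a < 2"
  shows "cond_oracle P (ccode r) a = cond_oracle P (ccode q) a"
  using assms unfolding sig_extends_def
  by (auto simp: cond_oracle_cond[OF assms(1)] cond_oracle_cond[OF assms(2)] split: if_split_asm)

lemma forces_mono:
  "is_cond q \<Longrightarrow> is_cond r \<Longrightarrow> sig_extends q r \<Longrightarrow> forces P e q n \<Longrightarrow> forces P e r n"
  unfolding forces_def using ev_partial_mono cond_oracle_mono by blast

lemma forces_imp_ev:
  assumes "is_cond q" "\<And>x y. x < y \<Longrightarrow> y < clen q \<Longrightarrow> f x y = csig q x y"
    and "forces P e q n"
  shows "ev (join (colset f) P) e [n] 1"
  using assms(3) unfolding forces_def
  by (rule ev_partial_imp_ev) (use cond_oracle_approx[OF assms(1,2)] in blast)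

lemma forces_bad_pair_imp_not_homogeneous:
  assumes "is_cond q" "\<And>x y. x < y \<Longrightarrow> y < clen q \<Longrightarrow> f x y = csig q x y"
    and H: "\<And>x. ev (join (colset f) P) e [x] (if x \<in> H then 1 else 0)"
    and "forces_bad_pair P e col q"
  shows "\<exists>x y. 2 * x \<in> H \<and> 2 * y + 1 \<in> H \<and> x \<noteq> y \<and> fpair f x y \<noteq> col"
proof -
  obtain x y where xy: "x < clen q" "y < clen q" "x \<noteq> y" "fpair (csig q) x y \<noteq> col"
    "forces P e q (2 * x)" "forces P e q (2 * y + 1)"
    using assms(4) unfolding forces_bad_pair_def by blast
  have forced_in_H: "n \<in> H" if "forces P e q n" for n
    using ev_det[OF forces_imp_ev[OF assms(1,2) that] H[of n]] by (simp split: if_splits)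
  have "fpair f x y = fpair (csig q) x y"
    using xy(1-3) assms(2)[of x y] assms(2)[of y x] by (auto simp: fpair_def)
  then show ?thesis
    using xy(3,4) forced_in_H[OF xy(5)] forced_in_H[OF xy(6)]
      by (intro exI[of _ x] exI[of _ y]) simp
qed

section \<open>Density of the decisive conditions\<close>

text \<open>A new pair whose left end \<open>x\<close>
  lies in \<open>r\<close> gets the colour prescribed by the label of \<open>x\<close>, so the label constraints of \<open>r\<close>
  survive; \<open>x0\<close> is committed to colour \<open>d\<close> from \<open>m\<close> on.\<close>
definition extend_cond :: "cond \<Rightarrow> nat \<Rightarrow> nat \<Rightarrow> nat \<Rightarrow> cond" where
  "extend_cond r m x0 d = (map (\<lambda>y. if y < clen r then fst r ! y else
        map (\<lambda>x'. if x' < clen r then fst (clab r x') else 0) [0..<y]) [0..<m],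
     map (\<lambda>x'. if x' = x0 then (d, m) else if x' < clen r then clab r x' else (0, m)) [0..<m])"

lemma extend_cond_clen [simp]: "clen (extend_cond r m x0 d) = m"
  by (simp add: extend_cond_def clen_def)

lemma extend_cond_csig: "x < y \<Longrightarrow> y < m \<Longrightarrow> csig (extend_cond r m x0 d) x y =
   (if y < clen r then csig r x y else if x < clen r then fst (clab r x) else 0)"
  by (simp add: extend_cond_def csig_def)

lemma extend_cond_clab: "x < m \<Longrightarrow> clab (extend_cond r m x0 d) x =
   (if x = x0 then (d, m) else if x < clen r then clab r x else (0, m))"
  by (simp add: extend_cond_def clab_def)

lemma is_cond_extend_cond:
  assumes r: "is_cond r" and "clen r \<le> m" and "d < 2"
  shows "is_cond (extend_cond r m x0 d)"
proof -
  have "length (fst r) = clen r" "\<forall>y<clen r. length (fst r ! y) = y"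
    using r by (auto simp: is_cond_def)
  then have "length (fst (extend_cond r m x0 d)) = m"
    "\<forall>y<m. length (fst (extend_cond r m x0 d) ! y) = y"
    by (simp_all add: extend_cond_def)
  then show ?thesis
    using r assms(3) unfolding is_cond_def extend_cond_clen
    by (auto simp: extend_cond_csig extend_cond_clab is_cond_def)
qed

lemma extend_cond_sig_extends: "clen r \<le> m \<Longrightarrow> sig_extends r (extend_cond r m x0 d)"
  by (simp add: sig_extends_def extend_cond_csig)

lemma extend_cond_cle: "cle r p \<Longrightarrow> clen r \<le> m \<Longrightarrow> clen p \<le> x0 \<Longrightarrow> cle (extend_cond r m x0 d) p"
  unfolding cle_def by (auto simp: extend_cond_csig extend_cond_clab)

lemma extend_committing:
  assumes "is_cond r" "cle r p" "clen p \<le> x" "d < 2"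
  obtains r' where "is_cond r'" "cle r' p" "sig_extends r r'" "x < clen r'"
    "clab r' x = (d, clen r')"
proof -
  let ?r' = "extend_cond r (max (clen r) (Suc x)) x d"
  show thesis
  proof (rule that[of ?r'])
    show "is_cond ?r'" by (rule is_cond_extend_cond) (use assms in auto)
    show "cle ?r' p" by (rule extend_cond_cle) (use assms in auto)
    show "sig_extends r ?r'" by (rule extend_cond_sig_extends) simp
  qed (simp_all add: extend_cond_clab)
qed

text \<open>First commit some \<open>x\<close> forced into the left half to the colour \<open>d \<noteq> col\<close>,
  then force some \<open>y\<close> beyond that commitment into the right half.\<close>

lemma decisive_dense:
  assumes p: "is_cond p"
  shows "\<exists>q\<in>decisive P e col. cle q p"
proof (rule ccontr)
  assume none: "\<not> (\<exists>q\<in>decisive P e col. cle q p)"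
  define d :: nat where "d = (if col = 0 then 1 else 0)"
  have d: "d < 2" "d \<noteq> col" by (auto simp: d_def)
  have "\<not> forces_side_finite P e 0 p" using none p cle_refl unfolding decisive_def by blast
  then obtain r x where r: "is_cond r" "cle r p" "clen p \<le> x" "forces P e r (2 * x)"
    unfolding forces_side_finite_def by fastforce
  obtain r1 where r1: "is_cond r1" "cle r1 p" "sig_extends r r1" "x < clen r1"
    "clab r1 x = (d, clen r1)"
    using extend_committing[OF r(1-3) d(1)] by blast
  have fx: "forces P e r1 (2 * x)" using forces_mono[OF r(1) r1(1,3) r(4)] .
  have "\<not> forces_side_finite P e 1 r1" using none r1(1,2) unfolding decisive_def by blast
  then obtain r2 y where r2: "is_cond r2" "cle r2 r1" "clen r1 \<le> y" "forces P e r2 (2 * y + 1)"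
    unfolding forces_side_finite_def by blast
  obtain q where q: "is_cond q" "cle q r1" "sig_extends r2 q" "y < clen q"
    using extend_committing[OF r2(1-3) d(1)] by blast
  have fy: "forces P e q (2 * y + 1)" using forces_mono[OF r2(1) q(1,3) r2(4)] .
  have fx': "forces P e q (2 * x)" using forces_mono[OF r1(1) q(1) cle_sig_extends[OF q(2)] fx] .
  have xy: "x < y" using r1(4) r2(3) by simp
  have "clab q x = (d, clen r1)" using q(2) r1(4,5) by (simp add: cle_def)
  then have "csig q x y = d" using q(1,4) xy r2(3) unfolding is_cond_def by fastforce
  then have "forces_bad_pair P e col q"
    unfolding forces_bad_pair_def using xy q(4) fx' fy d(2)
    by (intro exI[of _ x] exI[of _ y]) (auto simp: fpair_def)
  moreover have "cle q p" using cle_trans[OF q(2) r1(2)] .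
  ultimately show False using none q(1) unfolding decisive_def by blast
qed

section \<open>Sequences of conditions approximating the colouring\<close>

locale approximating_sequence =
  fixes P :: "nat set" and ps :: "nat \<Rightarrow> cond" and f :: "nat \<Rightarrow> nat \<Rightarrow> nat"
  assumes conds: "\<And>s. is_cond (ps s)"
    and desc: "\<And>s. cle (ps (Suc s)) (ps s)"
    and unbounded: "filterlim (\<lambda>s. clen (ps s)) at_top sequentially"
    and approx: "\<And>s x y. x < y \<Longrightarrow> y < clen (ps s) \<Longrightarrow> f x y = csig (ps s) x y"
begin

lemma ev_imp_forces_late:
  assumes "ev (join (colset f) P) e [n] 1"
  shows "\<exists>s\<ge>s0. forces P e (ps s) n"
proof -
  have "eventually (\<lambda>s. \<forall>ora. (\<forall>a<clen (ps s). ora a = chi (join (colset f) P) a) \<longrightarrow>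
      ev_partial ora e [n] 1) sequentially"
    using eventually_compose_filterlim[OF ev_imp_ev_partial[OF assms] unbounded] .
  then obtain N where N: "\<forall>s\<ge>N. \<forall>ora. (\<forall>a<clen (ps s). ora a = chi (join (colset f) P) a) \<longrightarrow>
      ev_partial ora e [n] 1"
    unfolding eventually_sequentially by blast
  define s where "s = max s0 N"
  have "s \<ge> s0" "s \<ge> N" by (simp_all add: s_def)
  then have use: "\<forall>ora. (\<forall>a<clen (ps s). ora a = chi (join (colset f) P) a) \<longrightarrow>
    ev_partial ora e [n] 1"
    using N by blast
  have "cond_oracle P (ccode (ps s)) a = chi (join (colset f) P) a" if "a < clen (ps s)" for a
    using cond_oracle_approx[OF conds approx cond_oracle_below_clen[OF conds that]] .
  then have "forces P e (ps s) n" unfolding forces_def using use by simp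
  with \<open>s \<ge> s0\<close> show ?thesis by blast
qed

lemma forces_side_finite_imp_finite:
  assumes H: "\<And>x. ev (join (colset f) P) e [x] (if x \<in> H then 1 else 0)"
    and "forces_side_finite P e j (ps s)"
  shows "finite {x. 2 * x + j \<in> H}"
proof -
  obtain a0 where a0: "\<forall>r x. is_cond r \<and> cle r (ps s) \<and> a0 \<le> x \<longrightarrow> \<not> forces P e r (2 * x + j)"
    using assms(2) unfolding forces_side_finite_def by blast
  have "x < a0" if "2 * x + j \<in> H" for x
  proof -
    have "ev (join (colset f) P) e [2 * x + j] 1" using H[of "2 * x + j"] that by simp
    then obtain s' where "s \<le> s'" and forced: "forces P e (ps s') (2 * x + j)"
      using ev_imp_forces_late by blast
    then have "cle (ps s') (ps s)" using cle_chain[of ps, OF desc] by blast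
    then show ?thesis using a0 conds[of s'] forced not_le by blast
  qed
  then have "{x. 2 * x + j \<in> H} \<subseteq> {..<a0}" by blast
  then show ?thesis using finite_subset by blast
qed

lemma not_decisive:
  assumes H: "\<And>x. ev (join (colset f) P) e [x] (if x \<in> H then 1 else 0)"
    and left: "infinite {x. 2 * x \<in> H}" and right: "infinite {y. 2 * y + 1 \<in> H}"
    and col: "\<And>x y. 2 * x \<in> H \<Longrightarrow> 2 * y + 1 \<in> H \<Longrightarrow> x \<noteq> y \<Longrightarrow> fpair f x y = col"
  shows "ps s \<notin> decisive P e col"
proof
  assume "ps s \<in> decisive P e col"
  then consider (bad_pair) "forces_bad_pair P e col (ps s)"
    | (finite_side) j where "j \<in> {0, 1}" "forces_side_finite P e j (ps s)"
    unfolding decisive_iff by blast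
  then show False
  proof cases
    case bad_pair
    then obtain x y where "2 * x \<in> H" "2 * y + 1 \<in> H" "x \<noteq> y" "fpair f x y \<noteq> col"
      using forces_bad_pair_imp_not_homogeneous[OF conds approx H] by blast
    then show False using col by blast
  next
    case finite_side
    have "finite {x. 2 * x + j \<in> H}" using forces_side_finite_imp_finite[OF H finite_side(2)] .
    then show False using finite_side(1) left right by auto
  qed
qed

end

theorem lemma4p2:
  fixes P :: "nat set" and ps :: "nat \<Rightarrow> cond" and f :: "nat \<Rightarrow> nat \<Rightarrow> nat"
  assumes conds: "\<And>s. is_cond (ps s)"
    and desc: "\<And>s. cle (ps (Suc s)) (ps s)"
    and unbounded: "filterlim (\<lambda>s. clen (ps s)) at_top sequentially"
    and generic: "three_generic P ps"
    and f_def: "\<And>s x y. x < y \<Longrightarrow> y < clen (ps s) \<Longrightarrow> f x y = csig (ps s) x y"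
  shows "\<not> (\<exists>H. p_homog f H \<and> turing_le H (join (colset f) P))"
proof
  interpret approximating_sequence P ps f
    using conds desc unbounded f_def by unfold_locales
  assume "\<exists>H. p_homog f H \<and> turing_le H (join (colset f) P)"
  then obtain H e where "p_homog f H"
    and H: "\<And>x. ev (join (colset f) P) e [x] (if x \<in> H then 1 else 0)"
    unfolding turing_le_def by blast
  then obtain col where "infinite {x. 2 * x \<in> H}" "infinite {y. 2 * y + 1 \<in> H}"
    and "\<And>x y. 2 * x \<in> H \<Longrightarrow> 2 * y + 1 \<in> H \<Longrightarrow> x \<noteq> y \<Longrightarrow> fpair f x y = col"
    unfolding p_homog_def Let_def by auto
  then have "ps s \<notin> decisive P e col" for s using not_decisive[OF H] by blast
  moreover have "decisive P e col \<subseteq> Collect is_cond" by (auto simp: decisive_def)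
  ultimately have "\<exists>s. \<not> (\<exists>q\<in>decisive P e col. cle q (ps s))"
    using generic decisive_sigma3 unfolding three_generic_def by blast
  then show False using decisive_dense conds by blast
qed

end
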